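(* Let the setting, algorithm and notation be as described in the context, suppose the constraint qualification holds and the optimization problem has a nonempty solution set. Fix $(\bar x,\bar y,\bar z)\in\mathcal W^*$ and let $\bar\phi_k:=\phi_k(\bar x,\bar y,\bar z)=(\tau\sigma)^{-1}\|z^k-\bar z\|^2+\|x^k-\bar x\|^2_{\widehat\Sigma_f+S}+\|y^k-\bar y\|^2_{\widehat\Sigma_g+T+\sigma BB^*}$. (a) For any $\eta\in(0,1/2)$ and $k\ge0$, with $\beta:=\eta(1-\eta)/(1-2\eta)$, \[ \big(\bar\phi_k+\beta\sigma\|r^k\|^2\big)-\big(\bar\phi_{k+1}+\beta\sigma\|r^{k+1}\|^2\big)\ge\Big(\tfrac{1}{\tau^2\sigma}\|z^{k+1}-z^k\|^2+\|x^{k+1}-x^k\|^2_{\widehat\Sigma_f+S+\eta\sigma AA^*}+\|y^{k+1}-y^k\|^2_{\widehat\Sigma_g+T+\eta\sigma BB^*}\Big)-\Big(\tfrac{\tau+\beta}{\tau^2\sigma}\|z^{k+1}-z^k\|^2+\|x^{k+1}-x^k\|^2_{\widehat\Sigma_f-\frac12\Sigma_f}+\|y^{k+1}-y^k\|^2_{\widehat\Sigma_g-\frac12\Sigma_g+\eta\sigma BB^*}\Big). \] If in addition, for some $\eta\in(0,1/2)$, $\widehat\Sigma_f+S+\eta\sigma AA^*\succ0$ and $\widehat\Sigma_g+T+\eta\sigma BB^*\succ0$, and \[ \sum_{k=0}^\infty\Big(\|x^{k+1}-x^k\|^2_{\widehat\Sigma_f}+\|y^{k+1}-y^k\|^2_{\widehat\Sigma_g+\sigma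 BB^*}+\|r^{k+1}\|^2\Big)<+\infty, \] then $\{(x^k,y^k)\}$ converges to an optimal solution of the optimization problem and $\{z^k\}$ converges to an optimal solution of its dual. (b) Assume $\frac12\widehat\Sigma_g+T\succeq0$. Then for any $\alpha\in(0,1]$ and $k\ge1$, with $\kappa:=1-\alpha\min(\tau,\tau^{-1})$, \[ \big[\bar\phi_k+\kappa\sigma\|r^k\|^2+\alpha\xi_k\big]-\big[\bar\phi_{k+1}+\kappa\sigma\|r^{k+1}\|^2+\alpha\xi_{k+1}\big]\ge t_{k+1}+\big(-\tau+\alpha\min(1+\tau,1+\tau^{-1})\big)\sigma\|r^{k+1}\|^2 . \] If in addition $\tau\in(0,(1+\sqrt5)/2)$ and for some $\alpha\in(\tau/\min(1+\tau,1+\tau^{-1}),1]$ one has $\widehat\Sigma_f+S\succeq0$, $H_f\succeq0$, $\frac12\Sigma_f+S+\sigma AA^*\succ0$ and $M_g\succ0$ (with $H_f,M_g$ defined using this $\alpha$), then $\{(x^k,y^k)\}$ converges to an optimal solution of the optimization problem and $\{z^k\}$ converges to an optimal solution of its dual.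
   Context: Let $\mathcal X,\mathcal Y,\mathcal Z$ be finite-dimensional real Euclidean spaces with inner products $\langle\cdot,\cdot\rangle$ and induced norms $\|\cdot\|$. Let $p:\mathcal X\to(-\infty,+\infty]$ and $q:\mathcal Y\to(-\infty,+\infty]$ be closed proper convex functions, and let $f:\mathcal X\to\mathbb R$, $g:\mathcal Y\to\mathbb R$ be convex differentiable functions with Lipschitz continuous gradients. Let $A:\mathcal Z\to\mathcal X$, $B:\mathcal Z\to\mathcal Y$ be linear maps with adjoints $A^*,B^*$, and $c\in\mathcal Z$. The optimization problem is $\min_{x,y}\{p(x)+f(x)+q(y)+g(y): A^*x+B^*y=c\}$. Constraint qualification: there is $(x_0,y_0)\in\mathrm{ri}(\mathrm{dom}(p)\times\mathrm{dom}(q))$ with $A^*x_0+B^*y_0=c$. $\mathcal W^*$ denotes the set of KKT points, i.e. $(\bar x,\bar y,\bar z)\in\mathcal X\times\mathcal Y\times\mathcal Z$ with $0\in\partial p(\bar x)+\nabla f(\bar x)+A\bar z$, $0\in\partial q(\bar y)+\nabla g(\bar y)+B\bar z$, $A^*\bar x+B^*\bar y=c$. Let $\Sigma_f,\widehat\Sigma_f$ (on $\mathcal X$) and $\Sigma_g,\widehat\Sigma_g$ (on $\mathcal Y$) be self-adjoint positive semidefinite linear operators with $\widehat\Sigma_f\succeq\Sigma_f$, $\widehat\Sigma_g\succeq\Sigma_g$, such that for all $x,x'\in\mathcal X$, $y,y'\in\mathcal Y$: $f(x')+\langle x-x',\nabla f(x')\rangle+\frac12\|x-x'\|^2_{\Sigma_f}\le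 f(x)\le f(x')+\langle x-x',\nabla f(x')\rangle+\frac12\|x-x'\|^2_{\widehat\Sigma_f}$ and the analogous two inequalities for $g$ with $\Sigma_g,\widehat\Sigma_g$. For a self-adjoint (possibly indefinite) operator $G$, $\|u\|_G^2:=\langle u,Gu\rangle$. Algorithm (Majorized iPADMM): let $\sigma>0$, $\tau>0$, and let $S:\mathcal X\to\mathcal X$, $T:\mathcal Y\to\mathcal Y$ be self-adjoint, possibly indefinite, linear operators with $\widehat\Sigma_f+S+\sigma AA^*\succeq0$ and $\widehat\Sigma_g+T+\sigma BB^*\succeq0$. Starting from $(x^0,y^0,z^0)\in\mathrm{dom}(p)\times\mathrm{dom}(q)\times\mathcal Z$, for $k=0,1,\dots$: $x^{k+1}\in\arg\min_{x}\{p(x)+\langle\nabla f(x^k),x\rangle+\frac12\|x-x^k\|^2_{\widehat\Sigma_f+S}+\langle z^k,A^*x\rangle+\frac\sigma2\|A^*x+B^*y^k-c\|^2\}$, $y^{k+1}\in\arg\min_{y}\{q(y)+\langle\nabla g(y^k),y\rangle+\frac12\|y-y^k\|^2_{\widehat\Sigma_g+T}+\langle z^k,B^*y\rangle+\frac\sigma2\|A^*x^{k+1}+B^*y-c\|^2\}$, $z^{k+1}=z^k+\tau\sigma(A^*x^{k+1}+B^*y^{k+1}-c)$ (the minimizers are assumed to exist). Notation: $r^k:=A^*x^k+B^*y^k-c$; for $\alpha\in(0,1]$, $H_f:=\frac12\Sigma_f+S+\frac12(1-\alpha)\sigma AA^*$ and $M_g:=\frac12\Sigma_g+T+\min(\tau,1+\tau-\tau^2)\alpha\sigma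 BB^*$; $\phi_k(x,y,z):=(\tau\sigma)^{-1}\|z^k-z\|^2+\|x^k-x\|^2_{\widehat\Sigma_f+S}+\|y^k-y\|^2_{\widehat\Sigma_g+T}+\sigma\|A^*x+B^*y^k-c\|^2$; $\xi_{k}:=\|y^{k}-y^{k-1}\|^2_{\widehat\Sigma_g+T}$; $t_{k+1}:=\|x^{k+1}-x^k\|^2_{H_f}+\|y^{k+1}-y^k\|^2_{M_g}$. *)

theory Defs
  imports "HOL-Analysis.Analysis"
begin

definition wsq :: "('a::real_inner \<Rightarrow> 'a) \<Rightarrow> 'a \<Rightarrow> real" where
  "wsq G u = u \<bullet> G u"

definition self_adjoint_op :: "('a::real_inner \<Rightarrow> 'a) \<Rightarrow> bool" where
  "self_adjoint_op G \<longleftrightarrow> linear G \<and> (\<forall>u v. G u \<bullet> v = u \<bullet> G v)"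

definition psd_op :: "('a::real_inner \<Rightarrow> 'a) \<Rightarrow> bool" where
  "psd_op G \<longleftrightarrow> (\<forall>u. 0 \<le> u \<bullet> G u)"

definition pd_op :: "('a::real_inner \<Rightarrow> 'a) \<Rightarrow> bool" where
  "pd_op G \<longleftrightarrow> (\<forall>u. u \<noteq> 0 \<longrightarrow> 0 < u \<bullet> G u)"

definition edom :: "('a \<Rightarrow> ereal) \<Rightarrow> 'a set" where
  "edom p = {x. p x < \<infinity>}"

definition proper_efun :: "('a \<Rightarrow> ereal) \<Rightarrow> bool" where
  "proper_efun p \<longleftrightarrow> (\<forall>x. p x \<noteq> -\<infinity>) \<and> (\<exists>x. p x \<noteq> \<infinity>)"

definition convex_efun :: "('a::real_vector \<Rightarrow> ereal) \<Rightarrow> bool" where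
  "convex_efun p \<longleftrightarrow> (\<forall>x y t. 0 < t \<longrightarrow> t < 1 \<longrightarrow>
      p ((1 - t) *\<^sub>R x + t *\<^sub>R y) \<le> ereal (1 - t) * p x + ereal t * p y)"

text \<open>Closed = lower semicontinuous = closed epigraph.\<close>
definition closed_efun :: "('a::topological_space \<Rightarrow> ereal) \<Rightarrow> bool" where
  "closed_efun p \<longleftrightarrow> closed {(x, t::real). p x \<le> ereal t}"

definition subdiff :: "('a::real_inner \<Rightarrow> ereal) \<Rightarrow> 'a \<Rightarrow> 'a set" where
  "subdiff p x = {v. p x < \<infinity> \<and> (\<forall>x'. p x + ereal (v \<bullet> (x' - x)) \<le> p x')}"

definition KKT_set ::
  "('a::euclidean_space \<Rightarrow> ereal) \<Rightarrow> ('a \<Rightarrow> 'a) \<Rightarrow> ('b::euclidean_space \<Rightarrow> ereal) \<Rightarrow> ('b \<Rightarrow> 'b)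
   \<Rightarrow> ('c::euclidean_space \<Rightarrow> 'a) \<Rightarrow> ('c \<Rightarrow> 'b) \<Rightarrow> 'c \<Rightarrow> ('a \<times> 'b \<times> 'c) set" where
  "KKT_set p Df q Dg A B c =
     {(xb, yb, zb). (\<exists>v \<in> subdiff p xb. v + Df xb + A zb = 0)
                  \<and> (\<exists>w \<in> subdiff q yb. w + Dg yb + B zb = 0)
                  \<and> adjoint A xb + adjoint B yb = c}"

definition primal_opt ::
  "('a::euclidean_space \<Rightarrow> ereal) \<Rightarrow> ('a \<Rightarrow> real) \<Rightarrow> ('b::euclidean_space \<Rightarrow> ereal) \<Rightarrow> ('b \<Rightarrow> real)
   \<Rightarrow> ('c::euclidean_space \<Rightarrow> 'a) \<Rightarrow> ('c \<Rightarrow> 'b) \<Rightarrow> 'c \<Rightarrow> 'a \<Rightarrow> 'b \<Rightarrow> bool" where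
  "primal_opt p f q g A B c x y \<longleftrightarrow>
     adjoint A x + adjoint B y = c \<and>
     (\<forall>x' y'. adjoint A x' + adjoint B y' = c \<longrightarrow>
        p x + ereal (f x) + q y + ereal (g y) \<le> p x' + ereal (f x') + q y' + ereal (g y'))"

definition dual_fun ::
  "('a::euclidean_space \<Rightarrow> ereal) \<Rightarrow> ('a \<Rightarrow> real) \<Rightarrow> ('b::euclidean_space \<Rightarrow> ereal) \<Rightarrow> ('b \<Rightarrow> real)
   \<Rightarrow> ('c::euclidean_space \<Rightarrow> 'a) \<Rightarrow> ('c \<Rightarrow> 'b) \<Rightarrow> 'c \<Rightarrow> 'c \<Rightarrow> ereal" where
  "dual_fun p f q g A B c z =
     (INF x. INF y. p x + ereal (f x) + q y + ereal (g y)
                      + ereal (z \<bullet> (adjoint A x + adjoint B y - c)))"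

definition dual_opt ::
  "('a::euclidean_space \<Rightarrow> ereal) \<Rightarrow> ('a \<Rightarrow> real) \<Rightarrow> ('b::euclidean_space \<Rightarrow> ereal) \<Rightarrow> ('b \<Rightarrow> real)
   \<Rightarrow> ('c::euclidean_space \<Rightarrow> 'a) \<Rightarrow> ('c \<Rightarrow> 'b) \<Rightarrow> 'c \<Rightarrow> 'c \<Rightarrow> bool" where
  "dual_opt p f q g A B c z \<longleftrightarrow> (\<forall>z'. dual_fun p f q g A B c z' \<le> dual_fun p f q g A B c z)"

definition xsub ::
  "('a::euclidean_space \<Rightarrow> ereal) \<Rightarrow> ('a \<Rightarrow> 'a) \<Rightarrow> ('a \<Rightarrow> 'a) \<Rightarrow> ('a \<Rightarrow> 'a)
   \<Rightarrow> ('c::euclidean_space \<Rightarrow> 'a) \<Rightarrow> ('c \<Rightarrow> 'b::euclidean_space) \<Rightarrow> 'c \<Rightarrow> real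
   \<Rightarrow> 'a \<Rightarrow> 'b \<Rightarrow> 'c \<Rightarrow> 'a \<Rightarrow> ereal" where
  "xsub p Df Shf S A B c \<sigma> xk yk zk x =
     p x + ereal (Df xk \<bullet> x + wsq (\<lambda>u. Shf u + S u) (x - xk) / 2 + zk \<bullet> adjoint A x
                  + \<sigma> / 2 * (norm (adjoint A x + adjoint B yk - c))\<^sup>2)"

definition ysub ::
  "('b::euclidean_space \<Rightarrow> ereal) \<Rightarrow> ('b \<Rightarrow> 'b) \<Rightarrow> ('b \<Rightarrow> 'b) \<Rightarrow> ('b \<Rightarrow> 'b)
   \<Rightarrow> ('c::euclidean_space \<Rightarrow> 'a::euclidean_space) \<Rightarrow> ('c \<Rightarrow> 'b) \<Rightarrow> 'c \<Rightarrow> real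
   \<Rightarrow> 'a \<Rightarrow> 'b \<Rightarrow> 'c \<Rightarrow> 'b \<Rightarrow> ereal" where
  "ysub q Dg Shg T A B c \<sigma> xk1 yk zk y =
     q y + ereal (Dg yk \<bullet> y + wsq (\<lambda>u. Shg u + T u) (y - yk) / 2 + zk \<bullet> adjoint B y
                  + \<sigma> / 2 * (norm (adjoint A xk1 + adjoint B y - c))\<^sup>2)"

definition miPADMM_seq ::
  "('a::euclidean_space \<Rightarrow> ereal) \<Rightarrow> ('a \<Rightarrow> 'a) \<Rightarrow> ('a \<Rightarrow> 'a) \<Rightarrow> ('a \<Rightarrow> 'a)
   \<Rightarrow> ('b::euclidean_space \<Rightarrow> ereal) \<Rightarrow> ('b \<Rightarrow> 'b) \<Rightarrow> ('b \<Rightarrow> 'b) \<Rightarrow> ('b \<Rightarrow> 'b)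
   \<Rightarrow> ('c::euclidean_space \<Rightarrow> 'a) \<Rightarrow> ('c \<Rightarrow> 'b) \<Rightarrow> 'c \<Rightarrow> real \<Rightarrow> real
   \<Rightarrow> (nat \<Rightarrow> 'a) \<Rightarrow> (nat \<Rightarrow> 'b) \<Rightarrow> (nat \<Rightarrow> 'c) \<Rightarrow> bool" where
  "miPADMM_seq p Df Shf S q Dg Shg T A B c \<sigma> \<tau> x y z \<longleftrightarrow>
     x 0 \<in> edom p \<and> y 0 \<in> edom q \<and>
     (\<forall>k. (\<forall>x'. xsub p Df Shf S A B c \<sigma> (x k) (y k) (z k) (x (Suc k))
                  \<le> xsub p Df Shf S A B c \<sigma> (x k) (y k) (z k) x')
        \<and> (\<forall>y'. ysub q Dg Shg T A B c \<sigma> (x (Suc k)) (y k) (z k) (y (Suc k))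
                  \<le> ysub q Dg Shg T A B c \<sigma> (x (Suc k)) (y k) (z k) y')
        \<and> z (Suc k) = z k + (\<tau> * \<sigma>) *\<^sub>R (adjoint A (x (Suc k)) + adjoint B (y (Suc k)) - c))"

end

theory Submission
  imports Defs
begin

(* For a KKT point w = (xb, yb, zb) consider the Lyapunov function
     phi(w) = 1/(tau sigma) |z - zb|^2 + |x - xb|^2_(Shf + S) + |y - yb|^2_(Shg + T)
              + sigma |A* xb + B* y - c|^2.
   The optimality conditions of the two subproblems produce subgradients of p and q; pairing them
   with the KKT subgradients by monotonicity, bounding the gradient terms by the three-point
   inequality that follows from the quadratic majorization of f and g, and expanding the multiplier
   update gives a one-step inequality for phi. Adding to phi a multiple of the squared residual
   (part (a)), resp. also of the previous y-step (part (b)), and absorbing the cross terms by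
   Young-type inequalities yields the two descent estimates.
   Under the positive definiteness hypotheses the corrected phi is quasi-Fejer monotone for every
   KKT point, hence convergent, and the steps and the residual tend to 0. So the iterates are
   bounded, every cluster point is a KKT point (the subdifferentials have closed graphs), phi at a
   cluster point tends to 0, and the whole sequence converges; KKT points are primal and dual
   optimal. *)

section \<open>Quadratic forms\<close>

lemma self_adjoint_op_linear: "self_adjoint_op G \<Longrightarrow> linear G"
  by (simp add: self_adjoint_op_def)

lemma self_adjoint_op_inner: "self_adjoint_op G \<Longrightarrow> u \<bullet> G v = G u \<bullet> v"
  by (simp add: self_adjoint_op_def)

lemma self_adjoint_op_add:
  "self_adjoint_op G \<Longrightarrow> self_adjoint_op H \<Longrightarrow> self_adjoint_op (\<lambda>u. G u + H u)"
  unfolding self_adjoint_op_def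
  by (auto simp: linear_compose_add inner_add_left inner_add_right)

lemma self_adjoint_op_scaleR: "self_adjoint_op G \<Longrightarrow> self_adjoint_op (\<lambda>u. c *\<^sub>R G u)"
  unfolding self_adjoint_op_def by (auto simp: linear_compose_scale_right)

lemma self_adjoint_op_gram:
  fixes A :: "'c::euclidean_space \<Rightarrow> 'a::euclidean_space"
  assumes "linear A"
  shows "self_adjoint_op (\<lambda>u. A (adjoint A u))"
  unfolding self_adjoint_op_def
proof (intro conjI allI)
  show "linear (\<lambda>u. A (adjoint A u))"
    using linear_compose[OF adjoint_linear[OF assms] assms] by (simp add: o_def)
  show "A (adjoint A u) \<bullet> v = u \<bullet> A (adjoint A v)" for u v
    using adjoint_clauses[OF assms] by metis
qed

lemma wsq_op_add: "wsq (\<lambda>u. G u + H u) x = wsq G x + wsq H x"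
  unfolding wsq_def by (simp add: inner_add_right)

lemma wsq_op_diff: "wsq (\<lambda>u. G u - H u) x = wsq G x - wsq H x"
  unfolding wsq_def by (simp add: inner_diff_right)

lemma wsq_op_scaleR: "wsq (\<lambda>u. c *\<^sub>R G u) x = c * wsq G x"
  unfolding wsq_def by simp

lemma wsq_op_add_gram:
  fixes A :: "'c::euclidean_space \<Rightarrow> 'a::euclidean_space"
  assumes "linear A"
  shows "wsq (\<lambda>u. G u + c *\<^sub>R A (adjoint A u)) x = wsq G x + c * (norm (adjoint A x))\<^sup>2"
  unfolding wsq_def using adjoint_clauses(2)[OF assms, of x "adjoint A x"]
  by (simp add: inner_add_right power2_norm_eq_inner)

lemma wsq_add:
  assumes "self_adjoint_op G"
  shows "wsq G (u + v) = wsq G u + 2 * (G u \<bullet> v) + wsq G v"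
  using assms linear_add[OF self_adjoint_op_linear[OF assms]] self_adjoint_op_inner[OF assms, of u v]
  unfolding wsq_def by (simp add: inner_add_left inner_add_right inner_commute)

lemma wsq_diff:
  assumes "self_adjoint_op G"
  shows "wsq G (u - v) = wsq G u - 2 * (G u \<bullet> v) + wsq G v"
  using assms linear_diff[OF self_adjoint_op_linear[OF assms]] self_adjoint_op_inner[OF assms, of u v]
  unfolding wsq_def by (simp add: inner_diff_left inner_diff_right inner_commute)

lemma wsq_three_point:
  assumes "self_adjoint_op G"
  shows "2 * (G (u1 - u0) \<bullet> (u1 - ub)) = wsq G (u1 - ub) - wsq G (u0 - ub) + wsq G (u1 - u0)"
  using wsq_diff[OF assms, of "u1 - ub" "u1 - u0"] self_adjoint_op_inner[OF assms, of "u1 - u0" "u1 - ub"]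
  by (simp add: inner_commute)

lemma wsq_scaleR: "linear G \<Longrightarrow> wsq G (t *\<^sub>R u) = t\<^sup>2 * wsq G u"
  unfolding wsq_def by (simp add: linear_scale power2_eq_square)

lemma wsq_minus: "linear G \<Longrightarrow> wsq G (- u) = wsq G u"
  unfolding wsq_def by (simp add: linear_neg)

lemma wsq_minus_commute: "linear G \<Longrightarrow> wsq G (u - v) = wsq G (v - u)"
  using wsq_minus[of G "v - u"] by simp

lemma psd_op_wsq_nonneg: "psd_op G \<Longrightarrow> 0 \<le> wsq G u"
  by (simp add: psd_op_def wsq_def)

lemma psd_op_wsq_diff_le:
  assumes "self_adjoint_op G" "psd_op G"
  shows "wsq G (u - v) \<le> 2 * wsq G u + 2 * wsq G v"
  using wsq_diff[OF assms(1), of u v] wsq_add[OF assms(1), of u v]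
    psd_op_wsq_nonneg[OF assms(2), of "u + v"] by simp

lemma pd_op_coercive:
  fixes G :: "'a::euclidean_space \<Rightarrow> 'a"
  assumes lin: "linear G" and pd: "pd_op G"
  obtains l where "l > 0" "\<And>u. l * (norm u)\<^sup>2 \<le> wsq G u"
proof -
  have cont: "continuous_on (sphere 0 1) (\<lambda>u. u \<bullet> G u)"
    using lin by (intro continuous_intros linear_continuous_on) (auto simp: linear_conv_bounded_linear)
  obtain b :: 'a where "b \<in> Basis" using nonempty_Basis by blast
  then have "sphere (0::'a) 1 \<noteq> {}" using norm_Basis by (auto simp: sphere_def)
  then obtain u0 where u0: "u0 \<in> sphere 0 1" and min: "\<And>u. u \<in> sphere 0 1 \<Longrightarrow> wsq G u0 \<le> wsq G u"
    using continuous_attains_inf[OF compact_sphere _ cont] unfolding wsq_def by blast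
  have "0 < wsq G u0" using u0 pd by (auto simp: pd_op_def wsq_def dest!: spec[of _ u0])
  moreover have "wsq G u0 * (norm u)\<^sup>2 \<le> wsq G u" for u
  proof (cases "u = 0")
    case True then show ?thesis using lin by (simp add: wsq_def linear_0)
  next
    case False
    have "(1 / norm u) *\<^sub>R u \<in> sphere 0 1" using False by simp
    then have "wsq G u0 \<le> wsq G ((1 / norm u) *\<^sub>R u)" by (rule min)
    also have "\<dots> = wsq G u / (norm u)\<^sup>2"
      using wsq_scaleR[OF lin] by (simp add: power_divide)
    finally show ?thesis using False by (simp add: field_simps)
  qed
  ultimately show thesis by (rule that)
qed

lemma pd_op_gram_coercive:
  fixes A :: "'c::euclidean_space \<Rightarrow> 'a::euclidean_space"
  assumes "self_adjoint_op G" "linear A" "pd_op (\<lambda>u. G u + t *\<^sub>R A (adjoint A u))"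
  obtains l where "l > 0" "\<And>u. l * (norm u)\<^sup>2 \<le> wsq (\<lambda>u. G u + t *\<^sub>R A (adjoint A u)) u"
  using pd_op_coercive[OF _ assms(3)] self_adjoint_op_linear[OF self_adjoint_op_add[OF assms(1)
      self_adjoint_op_scaleR[OF self_adjoint_op_gram[OF assms(2)]]]] by blast

lemma wsq_le_norm_sq:
  fixes G :: "'a::euclidean_space \<Rightarrow> 'a"
  assumes "linear G"
  obtains K where "K \<ge> 0" "\<And>u. wsq G u \<le> K * (norm u)\<^sup>2"
proof -
  obtain K where K: "\<And>u. norm (G u) \<le> K * norm u" using linear_bounded[OF assms] by blast
  have "wsq G u \<le> max K 0 * (norm u)\<^sup>2" for u
  proof -
    have "wsq G u \<le> norm u * norm (G u)" unfolding wsq_def by (rule norm_cauchy_schwarz)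
    also have "\<dots> \<le> norm u * (max K 0 * norm u)"
      using K[of u] by (intro mult_left_mono) (auto intro: order_trans[OF _ mult_right_mono])
    finally show ?thesis by (simp add: power2_eq_square mult_ac)
  qed
  then show thesis by (intro that[of "max K 0"]) auto
qed

lemma adjoint_norm_sq_le:
  fixes A :: "'c::euclidean_space \<Rightarrow> 'a::euclidean_space"
  assumes "linear A"
  obtains K where "K \<ge> 0" "\<And>u. (norm (adjoint A u))\<^sup>2 \<le> K * (norm u)\<^sup>2"
proof -
  obtain K where "K \<ge> 0" "\<And>u. wsq (\<lambda>u. A (adjoint A u)) u \<le> K * (norm u)\<^sup>2"
    using wsq_le_norm_sq[OF self_adjoint_op_linear[OF self_adjoint_op_gram[OF assms]]] by blast
  moreover have "wsq (\<lambda>u. A (adjoint A u)) u = (norm (adjoint A u))\<^sup>2" for u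
    using wsq_op_add_gram[OF assms, of "\<lambda>_. 0" 1 u] by (simp add: wsq_def)
  ultimately show thesis using that by simp
qed

lemma power2_norm_add: "(norm (u + v))\<^sup>2 = (norm u)\<^sup>2 + 2 * (u \<bullet> v) + (norm v)\<^sup>2"
  for u v :: "'a::real_inner"
  unfolding power2_norm_eq_inner by (simp add: inner_add_left inner_add_right inner_commute)

lemma power2_norm_diff: "(norm (u - v))\<^sup>2 = (norm u)\<^sup>2 - 2 * (u \<bullet> v) + (norm v)\<^sup>2"
  for u v :: "'a::real_inner"
  unfolding power2_norm_eq_inner by (simp add: inner_diff_left inner_diff_right inner_commute)

section \<open>Elementary inequalities\<close>

lemma young_diff_weighted:
  fixes s b :: "'c::real_inner"
  assumes "0 < \<eta>" "\<eta> < 1/2"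
  shows "\<eta> * (norm (s - b))\<^sup>2 \<le> \<eta> * (1 - \<eta>) / (1 - 2 * \<eta>) * (norm s)\<^sup>2 + (1 - \<eta>) * (norm b)\<^sup>2"
proof -
  have n1: "(norm (\<eta> *\<^sub>R s + (1 - 2 * \<eta>) *\<^sub>R b))\<^sup>2 = \<eta>\<^sup>2 * (norm s)\<^sup>2 + 2 * \<eta> * (1 - 2 * \<eta>) * (s \<bullet> b) + (1 - 2 * \<eta>)\<^sup>2 * (norm b)\<^sup>2"
    by (simp only: power2_norm_add norm_scaleR inner_scaleR_left inner_scaleR_right power_mult_distrib power2_abs)
      (simp add: algebra_simps)
  have n2: "(norm (s - b))\<^sup>2 = (norm s)\<^sup>2 - 2 * (s \<bullet> b) + (norm b)\<^sup>2" by (rule power2_norm_diff)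
  have key: "(1 - 2 * \<eta>) * (\<eta> * (1 - \<eta>) / (1 - 2 * \<eta>) * (norm s)\<^sup>2 + (1 - \<eta>) * (norm b)\<^sup>2 - \<eta> * (norm (s - b))\<^sup>2)
      = (norm (\<eta> *\<^sub>R s + (1 - 2 * \<eta>) *\<^sub>R b))\<^sup>2"
    unfolding n1 n2 using assms by (simp add: field_simps power2_eq_square)
  have "0 \<le> (1 - 2 * \<eta>) * (\<eta> * (1 - \<eta>) / (1 - 2 * \<eta>) * (norm s)\<^sup>2 + (1 - \<eta>) * (norm b)\<^sup>2 - \<eta> * (norm (s - b))\<^sup>2)"
    unfolding key by simp
  then show ?thesis using assms by (simp add: zero_le_mult_iff)
qed

lemma young_sum_weighted:
  fixes a b :: "'c::real_inner"
  assumes "0 < \<eta>" "\<eta> < 1/2"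
  shows "\<eta> * (norm a)\<^sup>2 \<le> (norm (a + b))\<^sup>2 + \<eta> * (1 - \<eta>) / (1 - 2 * \<eta>) * (norm b)\<^sup>2"
proof -
  define \<beta> where "\<beta> = \<eta> * (1 - \<eta>) / (1 - 2 * \<eta>)"
  have n1: "(norm ((1 - \<eta>) *\<^sub>R a + b))\<^sup>2 = (1 - \<eta>)\<^sup>2 * (norm a)\<^sup>2 + 2 * (1 - \<eta>) * (a \<bullet> b) + (norm b)\<^sup>2"
    unfolding power2_norm_add by (simp add: power_mult_distrib)
  have n2: "(norm (a + b))\<^sup>2 = (norm a)\<^sup>2 + 2 * (a \<bullet> b) + (norm b)\<^sup>2" by (rule power2_norm_add)
  have bb: "(1 - \<eta>) * (1 + \<beta>) - 1 = \<eta>^3 / (1 - 2 * \<eta>)"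
    using assms unfolding \<beta>_def by (simp add: field_simps power3_eq_cube)
  have bb0: "0 \<le> \<eta>^3 / (1 - 2 * \<eta>)" using assms by simp
  have key: "(1 - \<eta>) * ((norm (a + b))\<^sup>2 + \<beta> * (norm b)\<^sup>2 - \<eta> * (norm a)\<^sup>2)
      = (norm ((1 - \<eta>) *\<^sub>R a + b))\<^sup>2 + ((1 - \<eta>) * (1 + \<beta>) - 1) * (norm b)\<^sup>2"
    unfolding n1 n2 by (simp add: algebra_simps power2_eq_square)
  have "0 \<le> (1 - \<eta>) * ((norm (a + b))\<^sup>2 + \<beta> * (norm b)\<^sup>2 - \<eta> * (norm a)\<^sup>2)"
    unfolding key bb using bb0 by (intro add_nonneg_nonneg mult_nonneg_nonneg) auto
  then have "0 \<le> (norm (a + b))\<^sup>2 + \<beta> * (norm b)\<^sup>2 - \<eta> * (norm a)\<^sup>2"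
    using assms by (simp add: zero_le_mult_iff)
  then show ?thesis unfolding \<beta>_def by simp
qed

text \<open>The scalar inequality behind part (b), for the new and old residuals \<open>r\<close>, \<open>r\<^sub>0\<close> and
  \<open>b = B\<^sup>*(y\<^sub>1 - y\<^sub>0)\<close>: the quantity is a nonnegative combination of two squares, chosen
  differently for \<open>\<tau> \<le> 1\<close> and \<open>\<tau> > 1\<close>.\<close>
lemma residual_quadratic_nonneg:
  fixes r r\<^sub>0 b :: "'c::real_inner"
  assumes tau: "0 < \<tau>" and al: "0 < \<alpha>" "\<alpha> \<le> 1"
  shows "0 \<le> (norm b)\<^sup>2 + (2 - \<tau>) * (norm r)\<^sup>2 - 2 * (b \<bullet> r)
      + (1 - \<alpha> * min \<tau> (1 / \<tau>)) * ((norm r\<^sub>0)\<^sup>2 - (norm r)\<^sup>2)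
      + 2 * \<alpha> * ((r + (\<tau> - 1) *\<^sub>R r\<^sub>0) \<bullet> b)
      - (1 - \<alpha>) / 2 * (norm (r - r\<^sub>0 - b))\<^sup>2
      - min \<tau> (1 + \<tau> - \<tau>\<^sup>2) * \<alpha> * (norm b)\<^sup>2
      - (- \<tau> + \<alpha> * min (1 + \<tau>) (1 + 1 / \<tau>)) * (norm r)\<^sup>2"
    (is "0 \<le> ?E")
proof (cases "\<tau> \<le> 1")
  case True
  have m: "min \<tau> (1 / \<tau>) = \<tau>" "min \<tau> (1 + \<tau> - \<tau>\<^sup>2) = \<tau>" "min (1 + \<tau>) (1 + 1 / \<tau>) = 1 + \<tau>"
    using True tau by (auto simp: min_def field_simps power2_eq_square mult_le_one)
  have "?E = (1 - \<alpha>) / 2 * (norm (r + r\<^sub>0 - b))\<^sup>2 + \<alpha> * (1 - \<tau>) * (norm (r\<^sub>0 - b))\<^sup>2"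
    unfolding m power2_norm_eq_inner
    by (simp add: inner_add_left inner_add_right inner_diff_left inner_diff_right inner_commute field_simps)
  moreover have "0 \<le> (1 - \<alpha>) / 2 * (norm (r + r\<^sub>0 - b))\<^sup>2 + \<alpha> * (1 - \<tau>) * (norm (r\<^sub>0 - b))\<^sup>2"
    using True al by (intro add_nonneg_nonneg mult_nonneg_nonneg) auto
  ultimately show ?thesis by simp
next
  case False
  have m: "min \<tau> (1 / \<tau>) = 1 / \<tau>" "min \<tau> (1 + \<tau> - \<tau>\<^sup>2) = 1 + \<tau> - \<tau>\<^sup>2"
    "min (1 + \<tau>) (1 + 1 / \<tau>) = 1 + 1 / \<tau>"
    using False tau less_1_mult[of \<tau> \<tau>] by (auto simp: min_def field_simps power2_eq_square)
  have "?E = (1 - \<alpha>) / 2 * (norm (r + r\<^sub>0 - b))\<^sup>2 + \<alpha> * (\<tau> - 1) / \<tau> * (norm (r\<^sub>0 + \<tau> *\<^sub>R b))\<^sup>2"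
    unfolding m power2_norm_eq_inner using tau
    by (simp add: inner_add_left inner_add_right inner_diff_left inner_diff_right inner_commute
        field_simps power2_eq_square)
  moreover have "0 \<le> (1 - \<alpha>) / 2 * (norm (r + r\<^sub>0 - b))\<^sup>2 + \<alpha> * (\<tau> - 1) / \<tau> * (norm (r\<^sub>0 + \<tau> *\<^sub>R b))\<^sup>2"
    using False al tau by (intro add_nonneg_nonneg mult_nonneg_nonneg divide_nonneg_pos) auto
  ultimately show ?thesis by simp
qed

lemma admissible_dual_stepsize:
  fixes \<tau> \<alpha> :: real
  assumes tau: "0 < \<tau>" and al: "\<tau> / min (1 + \<tau>) (1 + 1 / \<tau>) < \<alpha>" "\<alpha> \<le> 1"
  shows "0 < \<alpha>" "0 \<le> 1 - \<alpha> * min \<tau> (1 / \<tau>)" "min \<tau> (1 + \<tau> - \<tau>\<^sup>2) * \<alpha> \<le> 1"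
    "\<tau> < \<alpha> * min (1 + \<tau>) (1 + 1 / \<tau>)"
proof -
  have \<mu>: "0 < min (1 + \<tau>) (1 + 1 / \<tau>)" using tau by (simp add: add_pos_pos)
  then show lt: "\<tau> < \<alpha> * min (1 + \<tau>) (1 + 1 / \<tau>)" using al(1) by (simp add: field_simps)
  show a0: "0 < \<alpha>"
  proof (rule ccontr)
    assume "\<not> 0 < \<alpha>"
    then have "\<alpha> * min (1 + \<tau>) (1 + 1 / \<tau>) \<le> 0" using \<mu> by (simp add: mult_nonpos_nonneg)
    then show False using lt tau by simp
  qed
  have "min \<tau> (1 / \<tau>) \<le> 1" "min \<tau> (1 + \<tau> - \<tau>\<^sup>2) \<le> 1"
    by (cases "\<tau> \<le> 1"; use tau in \<open>simp add: min_le_iff_disj power2_eq_square\<close>)+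
  then have "\<alpha> * min \<tau> (1 / \<tau>) \<le> 1 * 1" "min \<tau> (1 + \<tau> - \<tau>\<^sup>2) * \<alpha> \<le> 1"
    using al(2) a0 tau by (auto intro!: mult_mono mult_le_one)
  then show "0 \<le> 1 - \<alpha> * min \<tau> (1 / \<tau>)" "min \<tau> (1 + \<tau> - \<tau>\<^sup>2) * \<alpha> \<le> 1" by simp_all
qed

lemma tendsto_zero_if_norm_sq_le:
  fixes u :: "nat \<Rightarrow> 'a::real_normed_vector"
  assumes "\<And>k. (norm (u k))\<^sup>2 \<le> h k" and "h \<longlonglongrightarrow> 0"
  shows "u \<longlonglongrightarrow> 0"
proof (rule Lim_null_comparison)
  show "\<forall>\<^sub>F k in sequentially. norm (u k) \<le> sqrt (h k)"
    using assms(1) real_le_rsqrt by (simp add: real_le_rsqrt)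
  show "(\<lambda>k. sqrt (h k)) \<longlonglongrightarrow> 0"
    using tendsto_real_sqrt[OF assms(2)] by simp
qed

lemma quasi_fejer:
  fixes V D E :: "nat \<Rightarrow> real"
  assumes V0: "\<And>k. 0 \<le> V k" and D0: "\<And>k. 0 \<le> D k" and E0: "\<And>k. 0 \<le> E k"
    and Es: "summable E"
    and step: "\<And>k. k \<ge> N \<Longrightarrow> V (Suc k) + D k \<le> V k + E k"
  shows "convergent V" "summable (\<lambda>k. D (k + N))"
proof -
  define R where "R k = suminf E - (\<Sum>i<k. E i)" for k
  have R0: "0 \<le> R k" for k
    unfolding R_def suminf_minus_initial_segment[OF Es, symmetric]
    using E0 Es by (intro suminf_nonneg) auto
  have RS: "R (Suc k) = R k - E k" for k unfolding R_def by simp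
  have Rl: "R \<longlonglongrightarrow> 0"
    unfolding R_def using tendsto_diff[OF tendsto_const summable_LIMSEQ[OF Es], of "suminf E"] by simp
  \<comment> \<open>\<open>R\<close> is the tail of \<open>\<Sum>E\<close>, so \<open>V + R\<close> is nonincreasing from index \<open>N\<close> on\<close>
  define W where "W k = V (k + N) + R (k + N)" for k
  have dec: "W (Suc k) + D (k + N) \<le> W k" for k
    using step[of "k + N"] RS[of "k + N"] unfolding W_def by simp
  have W0: "0 \<le> W k" for k unfolding W_def using V0 R0 by (intro add_nonneg_nonneg)
  have "decseq W" using dec D0 by (smt (verit) decseq_Suc_iff)
  then obtain L where L: "W \<longlonglongrightarrow> L" using decseq_convergent[of W 0] W0 by blast
  have "(\<lambda>k. W k - R (k + N)) \<longlonglongrightarrow> L - 0"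
    by (intro tendsto_diff L LIMSEQ_ignore_initial_segment Rl)
  then have "(\<lambda>k. V (k + N)) \<longlonglongrightarrow> L" unfolding W_def by simp
  then show "convergent V" using convergent_ignore_initial_segment[of V N] by (auto simp: convergent_def)
  have partial: "(\<Sum>i<n. D (i + N)) + W n \<le> W 0" for n
  proof (induction n)
    case (Suc n) then show ?case using dec[of n] by simp
  qed simp
  show "summable (\<lambda>k. D (k + N))"
  proof (rule summableI_nonneg_bounded[where x="W 0"])
    show "(\<Sum>i<n. D (i + N)) \<le> W 0" for n using partial[of n] W0[of n] by linarith
  qed (rule D0)
qed

section \<open>Subgradients and gradients\<close>

lemma subdiff_monotone:
  assumes "proper_efun p" "u \<in> subdiff p a" "v \<in> subdiff p b"
  shows "0 \<le> (u - v) \<bullet> (a - b)"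
proof -
  have pa: "p a < \<infinity>" "p b < \<infinity>" using assms(2,3) by (auto simp: subdiff_def)
  have "p a \<noteq> -\<infinity>" "p b \<noteq> -\<infinity>" using assms(1) by (auto simp: proper_efun_def)
  then obtain P Q where PQ: "p a = ereal P" "p b = ereal Q" using pa
    by (metis ereal_cases less_ereal.simps(2) less_irrefl)
  have "p a + ereal (u \<bullet> (b - a)) \<le> p b" "p b + ereal (v \<bullet> (a - b)) \<le> p a"
    using assms(2,3) by (auto simp: subdiff_def)
  then have "P + u \<bullet> (b - a) \<le> Q" "Q + v \<bullet> (a - b) \<le> P" using PQ by auto
  then show ?thesis by (simp add: inner_diff_left inner_diff_right algebra_simps)
qed

lemma nonpos_if_le_small_multiples:
  fixes a c :: real
  assumes "\<And>t. 0 < t \<Longrightarrow> t < 1 \<Longrightarrow> a \<le> t * c"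
  shows "a \<le> 0"
proof (rule ccontr)
  assume "\<not> a \<le> 0"
  define t where "t = min (1/2) (a / (2 * (\<bar>c\<bar> + 1)))"
  have t0: "0 < t" "t < 1" using \<open>\<not> a \<le> 0\<close> by (auto simp: t_def)
  have "t * c \<le> t * (\<bar>c\<bar> + 1)" using t0 by (intro mult_left_mono) auto
  also have "\<dots> \<le> a / (2 * (\<bar>c\<bar> + 1)) * (\<bar>c\<bar> + 1)"
    by (intro mult_right_mono) (auto simp: t_def)
  also have "\<dots> = a / 2" by (simp add: field_simps)
  finally show False using assms[OF t0] \<open>\<not> a \<le> 0\<close> by simp
qed

lemma minimizer_subdiff_neg_gradient:
  fixes p :: "'a::real_inner \<Rightarrow> ereal"
  assumes pr: "proper_efun p" and cvx: "convex_efun p"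
    and min: "\<And>x'. p xs + ereal (h xs) \<le> p x' + ereal (h x')"
    and quad: "\<And>d t. h (xs + t *\<^sub>R d) = h xs + t * (g \<bullet> d) + t\<^sup>2 * Q d"
  shows "- g \<in> subdiff p xs"
proof -
  obtain x0 where x0: "p x0 \<noteq> \<infinity>" using pr by (auto simp: proper_efun_def)
  have ninf: "\<And>x. p x \<noteq> -\<infinity>" using pr by (auto simp: proper_efun_def)
  have "p xs + ereal (h xs) \<noteq> \<infinity>"
    using min[of x0] x0 ninf[of x0] by (cases "p x0") auto
  then have "p xs \<noteq> \<infinity>" by auto
  then obtain P where P: "p xs = ereal P" using ninf[of xs] by (cases "p xs") auto
  have "p xs + ereal (- g \<bullet> (x' - xs)) \<le> p x'" for x'
  proof (cases "p x' = \<infinity>")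
    case True then show ?thesis by simp
  next
    case False
    then obtain P' where P': "p x' = ereal P'" using ninf[of x'] by (cases "p x'") auto
    define d where "d = x' - xs"
    have "P - P' - g \<bullet> d \<le> 0"
    proof (rule nonpos_if_le_small_multiples[of _ "Q d"])
      fix t :: real assume t: "0 < t" "t < 1"
      have eq: "(1 - t) *\<^sub>R xs + t *\<^sub>R x' = xs + t *\<^sub>R d"
        by (simp add: d_def algebra_simps)
      have "p (xs + t *\<^sub>R d) \<le> ereal ((1 - t) * P + t * P')"
        using cvx t unfolding convex_efun_def eq[symmetric]
        by (metis P P' times_ereal.simps(1) plus_ereal.simps(1))
      moreover have "p xs + ereal (h xs) \<le> p (xs + t *\<^sub>R d) + ereal (h (xs + t *\<^sub>R d))"
        by (rule min)
      ultimately have "P + h xs \<le> (1 - t) * P + t * P' + h (xs + t *\<^sub>R d)"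
        using P by (cases "p (xs + t *\<^sub>R d)") auto
      then have "t * (P - P' - g \<bullet> d) \<le> t * (t * Q d)"
        unfolding quad by (simp add: algebra_simps power2_eq_square)
      then show "P - P' - g \<bullet> d \<le> t * Q d" using t by simp
    qed
    then show ?thesis using P P' by (simp add: d_def inner_minus_left)
  qed
  then show ?thesis unfolding subdiff_def using P by auto
qed

lemma subdiff_closed_graph:
  fixes p :: "'a::euclidean_space \<Rightarrow> ereal"
  assumes cl: "closed_efun p" and pp: "proper_efun p"
    and v: "\<And>j. v j \<in> subdiff p (xj j)" and xl: "xj \<longlonglongrightarrow> x" and vl: "v \<longlonglongrightarrow> w"
  shows "w \<in> subdiff p x"
proof -
  have ninf: "\<And>x. p x \<noteq> -\<infinity>" using pp by (auto simp: proper_efun_def)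
  have main: "p x \<le> ereal (P' - w \<bullet> (x' - x))" if P': "p x' = ereal P'" for x' P'
  proof -
    have cls: "closed {(x, t::real). p x \<le> ereal t}" using cl unfolding closed_efun_def .
    have tl: "(\<lambda>j. (xj j, P' - v j \<bullet> (x' - xj j))) \<longlonglongrightarrow> (x, P' - w \<bullet> (x' - x))"
      by (intro tendsto_Pair xl tendsto_diff tendsto_const tendsto_inner vl)
    have mem: "(xj j, P' - v j \<bullet> (x' - xj j)) \<in> {(x, t::real). p x \<le> ereal t}" for j
    proof -
      have h1: "p (xj j) + ereal (v j \<bullet> (x' - xj j)) \<le> p x'" and h2: "p (xj j) < \<infinity>"
        using v[of j] unfolding subdiff_def by blast+
      obtain Pj where Pj: "p (xj j) = ereal Pj" using h2 ninf[of "xj j"] by (cases "p (xj j)") auto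
      have "Pj + v j \<bullet> (x' - xj j) \<le> P'" using h1 unfolding Pj P' by simp
      then show ?thesis using Pj by simp
    qed
    have "(x, P' - w \<bullet> (x' - x)) \<in> {(x, t::real). p x \<le> ereal t}"
      using closed_sequentially[OF cls mem tl] .
    then show ?thesis by simp
  qed
  obtain x0 where x0: "p x0 \<noteq> \<infinity>" using pp by (auto simp: proper_efun_def)
  then obtain P0 where P0: "p x0 = ereal P0" using ninf[of x0] by (cases "p x0") auto
  have "p x \<le> ereal (P0 - w \<bullet> (x0 - x))" by (rule main[OF P0])
  then have fin: "p x \<noteq> \<infinity>" by auto
  then obtain P where P: "p x = ereal P" using ninf[of x] by (cases "p x") auto
  have "p x + ereal (w \<bullet> (x' - x)) \<le> p x'" for x'
  proof (cases "p x' = \<infinity>")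
    case True then show ?thesis by simp
  next
    case False
    then obtain P' where P': "p x' = ereal P'" using ninf[of x'] by (cases "p x'") auto
    have "P \<le> P' - w \<bullet> (x' - x)" using main[OF P'] P by simp
    then show ?thesis using P P' by simp
  qed
  then show ?thesis unfolding subdiff_def using P by auto
qed

lemma subgradient_inequality_add:
  fixes p :: "'a::real_inner \<Rightarrow> ereal"
  assumes pp: "proper_efun p" and v: "v \<in> subdiff p xs"
    and flo: "\<And>u u'. f u' + (u - u') \<bullet> Df u' + wsq Sf (u - u') / 2 \<le> f u"
    and Sf: "psd_op Sf"
  shows "p xs + ereal (f xs) + ereal ((v + Df xs) \<bullet> (x' - xs)) \<le> p x' + ereal (f x')"
proof -
  have ninf: "\<And>x. p x \<noteq> -\<infinity>" using pp by (auto simp: proper_efun_def)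
  obtain P where P: "p xs = ereal P" using v ninf[of xs] by (cases "p xs") (auto simp: subdiff_def)
  show ?thesis
  proof (cases "p x' = \<infinity>")
    case True then show ?thesis by simp
  next
    case False
    then obtain P' where P': "p x' = ereal P'" using ninf[of x'] by (cases "p x'") auto
    have "p xs + ereal (v \<bullet> (x' - xs)) \<le> p x'" using v by (auto simp: subdiff_def)
    then have 1: "P + v \<bullet> (x' - xs) \<le> P'" using P P' by simp
    have 2: "f xs + (x' - xs) \<bullet> Df xs \<le> f x'"
      using flo[where u=x' and u'=xs] psd_op_wsq_nonneg[OF Sf, of "x' - xs"] by simp
    have 3: "(v + Df xs) \<bullet> (x' - xs) = v \<bullet> (x' - xs) + Df xs \<bullet> (x' - xs)" by (simp add: inner_add_left)
    have 4: "(x' - xs) \<bullet> Df xs = Df xs \<bullet> (x' - xs)" by (simp add: inner_commute)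
    show ?thesis using 1 2 3 4 P P' by simp
  qed
qed

lemma gradient_three_point:
  fixes Df :: "'a::real_inner \<Rightarrow> 'a"
  assumes lo: "\<And>u u'. f u' + (u - u') \<bullet> Df u' + wsq Sf (u - u') / 2 \<le> f u"
    and up: "\<And>u u'. f u \<le> f u' + (u - u') \<bullet> Df u' + wsq Shf (u - u') / 2"
    and Sf: "self_adjoint_op Sf" "psd_op Sf"
  shows "wsq Sf (x1 - x0) / 4 - wsq Shf (x1 - x0) / 2 \<le> (Df x0 - Df xb) \<bullet> (x1 - xb)"
proof -
  have 1: "f x1 \<le> f x0 + (x1 - x0) \<bullet> Df x0 + wsq Shf (x1 - x0) / 2" by (rule up)
  have 2: "f x0 + (xb - x0) \<bullet> Df x0 + wsq Sf (xb - x0) / 2 \<le> f xb" by (rule lo)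
  have 3: "f xb + (x1 - xb) \<bullet> Df xb + wsq Sf (x1 - xb) / 2 \<le> f x1" by (rule lo)
  have "wsq Sf (x1 - x0) \<le> 2 * wsq Sf (x1 - xb) + 2 * wsq Sf (xb - x0)"
    using psd_op_wsq_diff_le[OF Sf, of "x1 - xb" "x0 - xb"]
      wsq_minus_commute[OF self_adjoint_op_linear[OF Sf(1)], of xb x0] by simp
  with 1 2 3 show ?thesis by (simp add: inner_diff_left inner_diff_right inner_commute algebra_simps)
qed

lemma gradient_cocoercive:
  fixes Dg :: "'a::real_inner \<Rightarrow> 'a"
  assumes lo: "\<And>u u'. g u' + (u - u') \<bullet> Dg u' + wsq Sg (u - u') / 2 \<le> g u"
    and up: "\<And>u u'. g u \<le> g u' + (u - u') \<bullet> Dg u' + wsq Shg (u - u') / 2"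
    and lin: "linear Shg" and psd: "psd_op Sg"
  shows "0 \<le> (Dg b - Dg a) \<bullet> (2 *\<^sub>R s + (b - a)) + wsq Shg s"
proof -
  have 1: "g a + (b + s - a) \<bullet> Dg a \<le> g (b + s)"
    using lo[where u="b + s" and u'=a] psd_op_wsq_nonneg[OF psd, of "b + s - a"] by simp
  have 2: "g (b + s) \<le> g b + s \<bullet> Dg b + wsq Shg s / 2" using up[where u="b + s" and u'=b] by simp
  have 3: "g b + (a - s - b) \<bullet> Dg b \<le> g (a - s)"
    using lo[where u="a - s" and u'=b] psd_op_wsq_nonneg[OF psd, of "a - s - b"] by simp
  have 4: "g (a - s) \<le> g a + (- s) \<bullet> Dg a + wsq Shg s / 2"
    using up[where u="a - s" and u'=a] wsq_minus[OF lin, of s] by simp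
  show ?thesis using 1 2 3 4
    by (simp add: inner_diff_left inner_diff_right inner_add_left inner_add_right inner_commute algebra_simps)
qed

section \<open>Optimality conditions\<close>

lemma augmented_term_expansion:
  fixes A :: "'c::euclidean_space \<Rightarrow> 'a::euclidean_space"
  assumes G: "self_adjoint_op G" and A: "linear A"
  shows "D \<bullet> (xs + t *\<^sub>R d) + wsq G (xs + t *\<^sub>R d - xk) / 2 + zk \<bullet> adjoint A (xs + t *\<^sub>R d)
          + \<sigma> / 2 * (norm (adjoint A (xs + t *\<^sub>R d) + w))\<^sup>2
        = (D \<bullet> xs + wsq G (xs - xk) / 2 + zk \<bullet> adjoint A xs + \<sigma> / 2 * (norm (adjoint A xs + w))\<^sup>2)
          + t * ((D + G (xs - xk) + A zk + \<sigma> *\<^sub>R A (adjoint A xs + w)) \<bullet> d)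
          + t\<^sup>2 * (wsq G d / 2 + \<sigma> / 2 * (norm (adjoint A d))\<^sup>2)"
proof -
  have la: "linear (adjoint A)" by (rule adjoint_linear[OF A])
  have e1: "xs + t *\<^sub>R d - xk = (xs - xk) + t *\<^sub>R d" by (simp add: algebra_simps)
  have w1: "wsq G (xs + t *\<^sub>R d - xk) = wsq G (xs - xk) + 2 * t * (G (xs - xk) \<bullet> d) + t\<^sup>2 * wsq G d"
    unfolding e1 wsq_add[OF G] wsq_scaleR[OF self_adjoint_op_linear[OF G]] by simp
  have a1: "adjoint A (xs + t *\<^sub>R d) = adjoint A xs + t *\<^sub>R adjoint A d"
    using la by (simp add: linear_add linear_scale)
  have n1: "(norm (adjoint A xs + t *\<^sub>R adjoint A d + w))\<^sup>2
      = (norm (adjoint A xs + w))\<^sup>2 + 2 * t * ((adjoint A xs + w) \<bullet> adjoint A d) + t\<^sup>2 * (norm (adjoint A d))\<^sup>2"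
    unfolding power2_norm_eq_inner
    by (simp add: inner_add_left inner_add_right inner_commute algebra_simps power2_eq_square)
  have i1: "(adjoint A xs + w) \<bullet> adjoint A d = A (adjoint A xs + w) \<bullet> d"
    by (simp add: adjoint_clauses[OF A] inner_commute)
  have i2: "zk \<bullet> adjoint A d = A zk \<bullet> d" by (simp add: adjoint_clauses[OF A])
  show ?thesis unfolding w1 a1 n1 i1
    by (simp add: inner_add_left inner_add_right i2 algebra_simps power2_eq_square)
qed

lemma xsub_minimizer_subdiff:
  fixes A :: "'c::euclidean_space \<Rightarrow> 'a::euclidean_space" and B :: "'c \<Rightarrow> 'b::euclidean_space"
  assumes pr: "proper_efun p" "convex_efun p" and G: "self_adjoint_op (\<lambda>u. Shf u + S u)"
    and A: "linear A"
    and mn: "\<And>x'. xsub p Df Shf S A B c \<sigma> xk yk zk xs \<le> xsub p Df Shf S A B c \<sigma> xk yk zk x'"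
  shows "- (Df xk + (Shf (xs - xk) + S (xs - xk)) + A zk + \<sigma> *\<^sub>R A (adjoint A xs + adjoint B yk - c))
          \<in> subdiff p xs"
proof -
  define h where "h = (\<lambda>x. Df xk \<bullet> x + wsq (\<lambda>u. Shf u + S u) (x - xk) / 2 + zk \<bullet> adjoint A x
                  + \<sigma> / 2 * (norm (adjoint A x + (adjoint B yk - c)))\<^sup>2)"
  have hx: "xsub p Df Shf S A B c \<sigma> xk yk zk x = p x + ereal (h x)" for x
    unfolding xsub_def h_def by (simp add: algebra_simps)
  have "- (Df xk + (Shf (xs - xk) + S (xs - xk)) + A zk + \<sigma> *\<^sub>R A (adjoint A xs + (adjoint B yk - c)))
          \<in> subdiff p xs"
  proof (rule minimizer_subdiff_neg_gradient[OF pr])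
    show "p xs + ereal (h xs) \<le> p x' + ereal (h x')" for x' using mn[of x'] unfolding hx .
    show "h (xs + t *\<^sub>R d) = h xs + t * ((Df xk + (Shf (xs - xk) + S (xs - xk)) + A zk + \<sigma> *\<^sub>R A (adjoint A xs + (adjoint B yk - c))) \<bullet> d)
       + t\<^sup>2 * (wsq (\<lambda>u. Shf u + S u) d / 2 + \<sigma> / 2 * (norm (adjoint A d))\<^sup>2)" for d t
      unfolding h_def using augmented_term_expansion[OF G A, of "Df xk" xs t d xk zk \<sigma> "adjoint B yk - c"] by simp
  qed
  then show ?thesis by (simp add: algebra_simps)
qed

lemma ysub_minimizer_subdiff:
  fixes A :: "'c::euclidean_space \<Rightarrow> 'a::euclidean_space" and B :: "'c \<Rightarrow> 'b::euclidean_space"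
  assumes pr: "proper_efun q" "convex_efun q" and G: "self_adjoint_op (\<lambda>u. Shg u + T u)"
    and B: "linear B"
    and mn: "\<And>y'. ysub q Dg Shg T A B c \<sigma> xk1 yk zk ys \<le> ysub q Dg Shg T A B c \<sigma> xk1 yk zk y'"
  shows "- (Dg yk + (Shg (ys - yk) + T (ys - yk)) + B zk + \<sigma> *\<^sub>R B (adjoint A xk1 + adjoint B ys - c))
          \<in> subdiff q ys"
proof -
  define h where "h = (\<lambda>y. Dg yk \<bullet> y + wsq (\<lambda>u. Shg u + T u) (y - yk) / 2 + zk \<bullet> adjoint B y
                  + \<sigma> / 2 * (norm (adjoint B y + (adjoint A xk1 - c)))\<^sup>2)"
  have hx: "ysub q Dg Shg T A B c \<sigma> xk1 yk zk y = q y + ereal (h y)" for y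
    unfolding ysub_def h_def by (simp add: algebra_simps)
  have "- (Dg yk + (Shg (ys - yk) + T (ys - yk)) + B zk + \<sigma> *\<^sub>R B (adjoint B ys + (adjoint A xk1 - c)))
          \<in> subdiff q ys"
  proof (rule minimizer_subdiff_neg_gradient[OF pr])
    show "q ys + ereal (h ys) \<le> q y' + ereal (h y')" for y' using mn[of y'] unfolding hx .
    show "h (ys + t *\<^sub>R d) = h ys + t * ((Dg yk + (Shg (ys - yk) + T (ys - yk)) + B zk + \<sigma> *\<^sub>R B (adjoint B ys + (adjoint A xk1 - c))) \<bullet> d)
       + t\<^sup>2 * (wsq (\<lambda>u. Shg u + T u) d / 2 + \<sigma> / 2 * (norm (adjoint B d))\<^sup>2)" for d t
      unfolding h_def using augmented_term_expansion[OF G B, of "Dg yk" ys t d yk zk \<sigma> "adjoint A xk1 - c"] by simp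
  qed
  then show ?thesis by (simp add: algebra_simps)
qed

lemma KKT_primal_dual_opt:
  fixes A :: "'c::euclidean_space \<Rightarrow> 'a::euclidean_space" and B :: "'c \<Rightarrow> 'b::euclidean_space"
  assumes A: "linear A" and B: "linear B"
    and pp: "proper_efun p" and pq: "proper_efun q"
    and flo: "\<And>u u'. f u' + (u - u') \<bullet> Df u' + wsq Sf (u - u') / 2 \<le> f u" and Sf: "psd_op Sf"
    and glo: "\<And>u u'. g u' + (u - u') \<bullet> Dg u' + wsq Sg (u - u') / 2 \<le> g u" and Sg: "psd_op Sg"
    and kkt: "(xs, ys, zs) \<in> KKT_set p Df q Dg A B c"
  shows "primal_opt p f q g A B c xs ys" "dual_opt p f q g A B c zs"
proof -
  obtain v w where v: "v \<in> subdiff p xs" "v + Df xs + A zs = 0"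
    and w: "w \<in> subdiff q ys" "w + Dg ys + B zs = 0" and feas: "adjoint A xs + adjoint B ys = c"
    using kkt unfolding KKT_set_def by auto
  have ninfp: "\<And>x. p x \<noteq> -\<infinity>" using pp by (auto simp: proper_efun_def)
  have ninfq: "\<And>x. q x \<noteq> -\<infinity>" using pq by (auto simp: proper_efun_def)
  obtain P where P: "p xs = ereal P" using v ninfp[of xs] by (cases "p xs") (auto simp: subdiff_def)
  obtain Q where Q: "q ys = ereal Q" using w ninfq[of ys] by (cases "q ys") (auto simp: subdiff_def)
  have vv: "v + Df xs = - A zs" using v(2) by (simp add: algebra_simps eq_neg_iff_add_eq_0)
  have ww: "w + Dg ys = - B zs" using w(2) by (simp add: algebra_simps eq_neg_iff_add_eq_0)
  define Pv where "Pv = P + f xs + Q + g ys"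
  have key: "ereal Pv
      \<le> p x' + ereal (f x') + q y' + ereal (g y') + ereal (zs \<bullet> (adjoint A x' + adjoint B y' - c))" for x' y'
  proof -
    have hx: "ereal (P + f xs - zs \<bullet> adjoint A (x' - xs)) \<le> p x' + ereal (f x')"
      using subgradient_inequality_add[OF pp v(1) flo Sf, of x'] unfolding vv P
      by (simp add: adjoint_clauses[OF A] inner_minus_left)
    have hy: "ereal (Q + g ys - zs \<bullet> adjoint B (y' - ys)) \<le> q y' + ereal (g y')"
      using subgradient_inequality_add[OF pq w(1) glo Sg, of y'] unfolding ww Q
      by (simp add: adjoint_clauses[OF B] inner_minus_left)
    have eq: "Pv
       = (P + f xs - zs \<bullet> adjoint A (x' - xs)) + (Q + g ys - zs \<bullet> adjoint B (y' - ys))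
         + zs \<bullet> (adjoint A x' + adjoint B y' - c)"
      unfolding Pv_def feas[symmetric]
      by (simp add: linear_diff[OF adjoint_linear[OF A]] linear_diff[OF adjoint_linear[OF B]]
          inner_diff_right inner_add_right algebra_simps)
    have "ereal Pv
        = ereal (P + f xs - zs \<bullet> adjoint A (x' - xs)) + ereal (Q + g ys - zs \<bullet> adjoint B (y' - ys))
          + ereal (zs \<bullet> (adjoint A x' + adjoint B y' - c))" unfolding eq by simp
    also have "\<dots> \<le> (p x' + ereal (f x')) + (q y' + ereal (g y')) + ereal (zs \<bullet> (adjoint A x' + adjoint B y' - c))"
      by (intro add_mono hx hy order_refl)
    also have "\<dots> = p x' + ereal (f x') + q y' + ereal (g y') + ereal (zs \<bullet> (adjoint A x' + adjoint B y' - c))"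
      by (simp add: add.assoc)
    finally show ?thesis .
  qed
  have valP: "p xs + ereal (f xs) + q ys + ereal (g ys) = ereal Pv" unfolding P Q Pv_def by simp
  show "primal_opt p f q g A B c xs ys"
    unfolding primal_opt_def
  proof (intro conjI allI impI)
    show "adjoint A xs + adjoint B ys = c" by (rule feas)
    fix x' y' assume f': "adjoint A x' + adjoint B y' = c"
    show "p xs + ereal (f xs) + q ys + ereal (g ys) \<le> p x' + ereal (f x') + q y' + ereal (g y')"
      using key[of x' y'] unfolding valP f' by simp
  qed
  have dz: "dual_fun p f q g A B c zs \<ge> ereal Pv"
    unfolding dual_fun_def by (intro INF_greatest) (use key in simp)
  have dz': "dual_fun p f q g A B c z' \<le> ereal Pv" for z'
  proof -
    have "dual_fun p f q g A B c z' \<le> p xs + ereal (f xs) + q ys + ereal (g ys) + ereal (z' \<bullet> (adjoint A xs + adjoint B ys - c))"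
      unfolding dual_fun_def
      by (rule INF_lower2[OF UNIV_I[of xs]], rule INF_lower2[OF UNIV_I[of ys]], simp)
    then show ?thesis unfolding valP feas by simp
  qed
  show "dual_opt p f q g A B c zs" unfolding dual_opt_def using dz dz' order_trans by blast
qed


lemma subdiff_step_monotone:
  fixes A :: "'c::euclidean_space \<Rightarrow> 'a::euclidean_space"
  assumes p: "proper_efun p" and A: "linear A"
    and u: "- (D0 + P + A z0 + \<sigma> *\<^sub>R A \<rho>) \<in> subdiff p x1"
    and v: "v \<in> subdiff p xb" "v + Db + A zb = 0"
  shows "(D0 - Db) \<bullet> (x1 - xb) + P \<bullet> (x1 - xb) + (z0 - zb) \<bullet> adjoint A (x1 - xb)
          + \<sigma> * (\<rho> \<bullet> adjoint A (x1 - xb)) \<le> 0"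
proof -
  have "0 \<le> (- (D0 + P + A z0 + \<sigma> *\<^sub>R A \<rho>) - v) \<bullet> (x1 - xb)"
    by (rule subdiff_monotone[OF p u v(1)])
  moreover have "v = - (Db + A zb)" using v(2) by (simp add: algebra_simps eq_neg_iff_add_eq_0)
  moreover have "A w \<bullet> (x1 - xb) = w \<bullet> adjoint A (x1 - xb)" for w
    by (simp add: adjoint_clauses(1)[OF A])
  ultimately show ?thesis
    by (simp add: inner_add_left inner_diff_left linear_diff[OF A] algebra_simps)
qed

section \<open>One step of the majorized iPADMM\<close>

locale ipadmm_data =
  fixes p :: "'a::euclidean_space \<Rightarrow> ereal" and f :: "'a \<Rightarrow> real" and Df :: "'a \<Rightarrow> 'a"
    and q :: "'b::euclidean_space \<Rightarrow> ereal" and g :: "'b \<Rightarrow> real" and Dg :: "'b \<Rightarrow> 'b"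
    and A :: "'c::euclidean_space \<Rightarrow> 'a" and B :: "'c \<Rightarrow> 'b" and c :: 'c
    and Sf Shf S :: "'a \<Rightarrow> 'a" and Sg Shg T :: "'b \<Rightarrow> 'b"
    and \<sigma> \<tau> :: real
  assumes p: "proper_efun p" "convex_efun p" "closed_efun p"
    and q: "proper_efun q" "convex_efun q" "closed_efun q"
    and Df_cont: "continuous_on UNIV Df" and Dg_cont: "continuous_on UNIV Dg"
    and A_lin: "linear A" and B_lin: "linear B"
    and Sf: "self_adjoint_op Sf" "psd_op Sf" and Shf: "self_adjoint_op Shf" "psd_op Shf"
    and Shf_ge: "psd_op (\<lambda>u. Shf u - Sf u)"
    and Sg: "self_adjoint_op Sg" "psd_op Sg" and Shg: "self_adjoint_op Shg" "psd_op Shg"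
    and Shg_ge: "psd_op (\<lambda>v. Shg v - Sg v)"
    and f_lower: "\<And>u u'. f u' + (u - u') \<bullet> Df u' + wsq Sf (u - u') / 2 \<le> f u"
    and f_upper: "\<And>u u'. f u \<le> f u' + (u - u') \<bullet> Df u' + wsq Shf (u - u') / 2"
    and g_lower: "\<And>v v'. g v' + (v - v') \<bullet> Dg v' + wsq Sg (v - v') / 2 \<le> g v"
    and g_upper: "\<And>v v'. g v \<le> g v' + (v - v') \<bullet> Dg v' + wsq Shg (v - v') / 2"
    and sigma_pos: "\<sigma> > 0" and tau_pos: "\<tau> > 0"
    and S: "self_adjoint_op S" and T: "self_adjoint_op T"
begin

text \<open>\<open>Px\<close> and \<open>Py\<close> are the proximal weights of the two subproblems, and \<open>lyap xb yb zb\<close> is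
  the function \<open>\<phi>(xb, yb, zb)\<close> of the paper, evaluated at an arbitrary point.\<close>
abbreviation Px :: "'a \<Rightarrow> 'a" where "Px \<equiv> \<lambda>u. Shf u + S u"
abbreviation Py :: "'b \<Rightarrow> 'b" where "Py \<equiv> \<lambda>v. Shg v + T v"
abbreviation res :: "'a \<Rightarrow> 'b \<Rightarrow> 'c" where "res u v \<equiv> adjoint A u + adjoint B v - c"

abbreviation lyap :: "'a \<Rightarrow> 'b \<Rightarrow> 'c \<Rightarrow> 'a \<Rightarrow> 'b \<Rightarrow> 'c \<Rightarrow> real" where
  "lyap xb yb zb u v w \<equiv> 1 / (\<tau> * \<sigma>) * (norm (w - zb))\<^sup>2 + wsq Px (u - xb) + wsq Py (v - yb)
     + \<sigma> * (norm (res xb v))\<^sup>2"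

lemma Px_self_adjoint: "self_adjoint_op Px"
  using self_adjoint_op_add[OF Shf(1) S] .

lemma Py_self_adjoint: "self_adjoint_op Py"
  using self_adjoint_op_add[OF Shg(1) T] .

lemma one_step_inequality:
  assumes ux: "- (Df x0 + Px (x1 - x0) + A z0 + \<sigma> *\<^sub>R A (res x1 y0)) \<in> subdiff p x1"
    and uy: "- (Dg y0 + Py (y1 - y0) + B z0 + \<sigma> *\<^sub>R B (res x1 y1)) \<in> subdiff q y1"
    and z1: "z1 = z0 + (\<tau> * \<sigma>) *\<^sub>R res x1 y1"
    and kkt: "(xb, yb, zb) \<in> KKT_set p Df q Dg A B c"
  shows "lyap xb yb zb x0 y0 z0 - lyap xb yb zb x1 y1 z1
     \<ge> wsq S (x1 - x0) + wsq Sf (x1 - x0) / 2 + wsq T (y1 - y0) + wsq Sg (y1 - y0) / 2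
       + \<sigma> * (norm (adjoint B (y1 - y0)))\<^sup>2 + (2 - \<tau>) * \<sigma> * (norm (res x1 y1))\<^sup>2
       - 2 * \<sigma> * (adjoint B (y1 - y0) \<bullet> res x1 y1)"
proof -
  obtain vb wb where vb: "vb \<in> subdiff p xb" "vb + Df xb + A zb = 0"
    and wb: "wb \<in> subdiff q yb" "wb + Dg yb + B zb = 0" and feas: "adjoint A xb + adjoint B yb = c"
    using kkt unfolding KKT_set_def by auto
  have la: "linear (adjoint A)" and lb: "linear (adjoint B)" using adjoint_linear A_lin B_lin by auto
  define \<rho> where "\<rho> = res x1 y1"
  define ax where "ax = adjoint A (x1 - xb)"
  define by1 where "by1 = adjoint B (y1 - yb)"
  define bd where "bd = adjoint B (y1 - y0)"
  have \<rho>_split: "\<rho> = ax + by1"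
    unfolding \<rho>_def ax_def by1_def using feas by (simp add: linear_diff[OF la] linear_diff[OF lb] algebra_simps)
  have res_x1y0: "res x1 y0 = \<rho> - bd"
    unfolding \<rho>_def bd_def by (simp add: linear_diff[OF lb] algebra_simps)
  have res_xb: "res xb y1 = by1" "res xb y0 = by1 - bd"
    unfolding by1_def bd_def using feas by (simp_all add: linear_diff[OF lb] algebra_simps)
  have Mx: "(Df x0 - Df xb) \<bullet> (x1 - xb) + Px (x1 - x0) \<bullet> (x1 - xb) + (z0 - zb) \<bullet> ax
      + \<sigma> * ((\<rho> - bd) \<bullet> ax) \<le> 0"
    using subdiff_step_monotone[OF p(1) A_lin ux vb] unfolding res_x1y0 ax_def .
  have My: "(Dg y0 - Dg yb) \<bullet> (y1 - yb) + Py (y1 - y0) \<bullet> (y1 - yb) + (z0 - zb) \<bullet> by1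
      + \<sigma> * (\<rho> \<bullet> by1) \<le> 0"
    using subdiff_step_monotone[OF q(1) B_lin uy wb] unfolding \<rho>_def[symmetric] by1_def .
  have Fx: "wsq Sf (x1 - x0) / 4 - wsq Shf (x1 - x0) / 2 \<le> (Df x0 - Df xb) \<bullet> (x1 - xb)"
    by (rule gradient_three_point[OF f_lower f_upper Sf])
  have Fy: "wsq Sg (y1 - y0) / 4 - wsq Shg (y1 - y0) / 2 \<le> (Dg y0 - Dg yb) \<bullet> (y1 - yb)"
    by (rule gradient_three_point[OF g_lower g_upper Sg])
  have IZ: "1 / (\<tau> * \<sigma>) * (norm (z1 - zb))\<^sup>2
      = 1 / (\<tau> * \<sigma>) * (norm (z0 - zb))\<^sup>2 + 2 * ((z0 - zb) \<bullet> \<rho>) + \<tau> * \<sigma> * (norm \<rho>)\<^sup>2"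
  proof -
    have e: "z1 - zb = (z0 - zb) + (\<tau> * \<sigma>) *\<^sub>R \<rho>" unfolding z1 \<rho>_def by simp
    have "(norm (z1 - zb))\<^sup>2
        = (norm (z0 - zb))\<^sup>2 + 2 * (\<tau> * \<sigma>) * ((z0 - zb) \<bullet> \<rho>) + (\<tau> * \<sigma>)\<^sup>2 * (norm \<rho>)\<^sup>2"
      unfolding e power2_norm_add by (simp add: power_mult_distrib)
    then show ?thesis using sigma_pos tau_pos by (simp add: field_simps power2_eq_square)
  qed
  have cross: "(\<rho> - bd) \<bullet> ax + \<rho> \<bullet> by1
     = (norm \<rho>)\<^sup>2 - bd \<bullet> \<rho> + (norm by1)\<^sup>2 / 2 - (norm (by1 - bd))\<^sup>2 / 2 + (norm bd)\<^sup>2 / 2"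
    unfolding \<rho>_split power2_norm_eq_inner
    by (simp add: inner_add_left inner_add_right inner_diff_left inner_diff_right inner_commute field_simps)
  have zz: "(z0 - zb) \<bullet> ax + (z0 - zb) \<bullet> by1 = (z0 - zb) \<bullet> \<rho>"
    unfolding \<rho>_split by (simp add: inner_add_right)
  have E: "\<sigma> * ((\<rho> - bd) \<bullet> ax) + \<sigma> * (\<rho> \<bullet> by1)
     = \<sigma> * (norm \<rho>)\<^sup>2 - \<sigma> * (bd \<bullet> \<rho>) + \<sigma> * (norm by1)\<^sup>2 / 2
       - \<sigma> * (norm (by1 - bd))\<^sup>2 / 2 + \<sigma> * (norm bd)\<^sup>2 / 2"
  proof -
    have "\<sigma> * ((\<rho> - bd) \<bullet> ax) + \<sigma> * (\<rho> \<bullet> by1) = \<sigma> * ((\<rho> - bd) \<bullet> ax + \<rho> \<bullet> by1)"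
      by (simp only: distrib_left)
    also have "\<dots> = \<sigma> * ((norm \<rho>)\<^sup>2 - bd \<bullet> \<rho> + (norm by1)\<^sup>2 / 2 - (norm (by1 - bd))\<^sup>2 / 2 + (norm bd)\<^sup>2 / 2)"
      by (simp only: cross)
    finally show ?thesis by (simp only: distrib_left right_diff_distrib times_divide_eq_right)
  qed
  have e: "(2 - \<tau>) * \<sigma> * (norm \<rho>)\<^sup>2 = 2 * (\<sigma> * (norm \<rho>)\<^sup>2) - \<tau> * (\<sigma> * (norm \<rho>)\<^sup>2)"
    "2 * \<sigma> * (bd \<bullet> \<rho>) = 2 * (\<sigma> * (bd \<bullet> \<rho>))" "\<tau> * \<sigma> * (norm \<rho>)\<^sup>2 = \<tau> * (\<sigma> * (norm \<rho>)\<^sup>2)"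
    by (simp_all add: algebra_simps)
  show ?thesis
    using Mx My Fx Fy wsq_three_point[OF Px_self_adjoint, of x1 x0 xb]
      wsq_three_point[OF Py_self_adjoint, of y1 y0 yb] IZ zz E
      wsq_op_add[of Shf S "x1 - x0"] wsq_op_add[of Shg T "y1 - y0"]
    unfolding res_xb \<rho>_def[symmetric] bd_def[symmetric] e by linarith
qed

lemma consecutive_y_steps:
  assumes hT: "psd_op (\<lambda>v. (1/2) *\<^sub>R Shg v + T v)"
    and uy: "- (Dg y0 + Py (y1 - y0) + B z0 + \<sigma> *\<^sub>R B (res x1 y1)) \<in> subdiff q y1"
    and uy0: "- (Dg ym + Py (y0 - ym) + B zm + \<sigma> *\<^sub>R B (res x0 y0)) \<in> subdiff q y0"
    and z0: "z0 = zm + (\<tau> * \<sigma>) *\<^sub>R res x0 y0"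
  shows "2 * \<sigma> * ((res x1 y1 + (\<tau> - 1) *\<^sub>R res x0 y0) \<bullet> adjoint B (y1 - y0))
         \<le> wsq Py (y0 - ym) - wsq Py (y1 - y0)"
proof -
  define dy where "dy = y1 - y0"
  define dy' where "dy' = y0 - ym"
  define \<rho> where "\<rho> = res x1 y1"
  define \<rho>0 where "\<rho>0 = res x0 y0"
  have "0 \<le> (- (Dg y0 + Py dy + B z0 + \<sigma> *\<^sub>R B \<rho>) - - (Dg ym + Py dy' + B zm + \<sigma> *\<^sub>R B \<rho>0)) \<bullet> dy"
    using subdiff_monotone[OF q(1) uy uy0] unfolding dy_def dy'_def \<rho>_def \<rho>0_def .
  moreover have "B z0 - B zm = B ((\<tau> * \<sigma>) *\<^sub>R \<rho>0)"
    unfolding z0 \<rho>0_def by (simp add: linear_add[OF B_lin])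
  moreover have "B ((\<tau> * \<sigma>) *\<^sub>R \<rho>0 + \<sigma> *\<^sub>R \<rho> - \<sigma> *\<^sub>R \<rho>0) \<bullet> dy
      = \<sigma> * ((\<rho> + (\<tau> - 1) *\<^sub>R \<rho>0) \<bullet> adjoint B dy)"
    using adjoint_clauses(1)[OF B_lin, of "(\<tau> * \<sigma>) *\<^sub>R \<rho>0 + \<sigma> *\<^sub>R \<rho> - \<sigma> *\<^sub>R \<rho>0" dy]
    by (simp add: inner_commute inner_add_left inner_diff_left algebra_simps)
  ultimately have mono: "(Dg y0 - Dg ym) \<bullet> dy + Py dy \<bullet> dy - Py dy' \<bullet> dy
      + \<sigma> * ((\<rho> + (\<tau> - 1) *\<^sub>R \<rho>0) \<bullet> adjoint B dy) \<le> 0"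
    by (simp add: inner_diff_left inner_add_left linear_add[OF B_lin] linear_diff[OF B_lin]
        linear_scale[OF B_lin] algebra_simps)
  \<comment> \<open>cocoercivity of \<open>\<nabla>g\<close> with the step \<open>s = (dy - dy')/2\<close> absorbs the gradient term\<close>
  have "0 \<le> (Dg y0 - Dg ym) \<bullet> (2 *\<^sub>R ((1/2) *\<^sub>R (dy - dy')) + (y0 - ym)) + wsq Shg ((1/2) *\<^sub>R (dy - dy'))"
    by (rule gradient_cocoercive[OF g_lower g_upper self_adjoint_op_linear[OF Shg(1)] Sg(2)])
  then have coco: "- wsq Shg (dy - dy') / 4 \<le> (Dg y0 - Dg ym) \<bullet> dy"
    unfolding wsq_scaleR[OF self_adjoint_op_linear[OF Shg(1)]] dy'_def by (simp add: power2_eq_square)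
  have "0 \<le> wsq Shg (dy - dy') / 2 + wsq T (dy - dy')"
    using psd_op_wsq_nonneg[OF hT, of "dy - dy'"] unfolding wsq_op_add wsq_op_scaleR by simp
  then have "2 * \<sigma> * ((\<rho> + (\<tau> - 1) *\<^sub>R \<rho>0) \<bullet> adjoint B dy) \<le> wsq Py dy' - wsq Py dy"
    using mono coco wsq_diff[OF Py_self_adjoint, of dy dy'] wsq_op_add[of Shg T "dy - dy'"]
      self_adjoint_op_inner[OF Py_self_adjoint, of dy' dy]
    by (simp add: wsq_def inner_commute)
  then show ?thesis unfolding dy_def dy'_def \<rho>_def \<rho>0_def .
qed

lemma descent_step_a:
  assumes ux: "- (Df x0 + Px (x1 - x0) + A z0 + \<sigma> *\<^sub>R A (res x1 y0)) \<in> subdiff p x1"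
    and uy: "- (Dg y0 + Py (y1 - y0) + B z0 + \<sigma> *\<^sub>R B (res x1 y1)) \<in> subdiff q y1"
    and z1: "z1 = z0 + (\<tau> * \<sigma>) *\<^sub>R res x1 y1"
    and kkt: "(xb, yb, zb) \<in> KKT_set p Df q Dg A B c"
    and eta: "0 < \<eta>" "\<eta> < 1/2"
  defines "\<beta> \<equiv> \<eta> * (1 - \<eta>) / (1 - 2 * \<eta>)"
  shows "(lyap xb yb zb x0 y0 z0 + \<beta> * \<sigma> * (norm (res x0 y0))\<^sup>2)
           - (lyap xb yb zb x1 y1 z1 + \<beta> * \<sigma> * (norm (res x1 y1))\<^sup>2)
         \<ge> (1 / (\<tau>\<^sup>2 * \<sigma>) * (norm (z1 - z0))\<^sup>2
              + wsq (\<lambda>u. Px u + (\<eta> * \<sigma>) *\<^sub>R A (adjoint A u)) (x1 - x0)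
              + wsq (\<lambda>v. Py v + (\<eta> * \<sigma>) *\<^sub>R B (adjoint B v)) (y1 - y0))
           - ((\<tau> + \<beta>) / (\<tau>\<^sup>2 * \<sigma>) * (norm (z1 - z0))\<^sup>2
              + wsq (\<lambda>u. Shf u - (1/2) *\<^sub>R Sf u) (x1 - x0)
              + wsq (\<lambda>v. Shg v - (1/2) *\<^sub>R Sg v + (\<eta> * \<sigma>) *\<^sub>R B (adjoint B v)) (y1 - y0))"
proof -
  define \<rho> where "\<rho> = res x1 y1"
  define \<rho>0 where "\<rho>0 = res x0 y0"
  define bd where "bd = adjoint B (y1 - y0)"
  define ad where "ad = adjoint A (x1 - x0)"
  have core: "lyap xb yb zb x0 y0 z0 - lyap xb yb zb x1 y1 z1
     \<ge> wsq S (x1 - x0) + wsq Sf (x1 - x0) / 2 + wsq T (y1 - y0) + wsq Sg (y1 - y0) / 2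
       + \<sigma> * (norm bd)\<^sup>2 + (2 - \<tau>) * \<sigma> * (norm \<rho>)\<^sup>2 - 2 * \<sigma> * (bd \<bullet> \<rho>)"
    unfolding bd_def \<rho>_def by (rule one_step_inequality[OF ux uy z1 kkt])
  \<comment> \<open>the \<open>A\<^sup>*\<close>-part of the \<open>x\<close>-step is controlled by the two residuals and the \<open>B\<^sup>*\<close>-part\<close>
  have split: "\<rho> - bd = ad + \<rho>0"
    unfolding \<rho>_def bd_def ad_def \<rho>0_def
    by (simp add: linear_diff[OF adjoint_linear[OF A_lin]] linear_diff[OF adjoint_linear[OF B_lin]] algebra_simps)
  have "\<eta> * (norm ad)\<^sup>2 \<le> (norm (\<rho> - bd))\<^sup>2 + \<beta> * (norm \<rho>0)\<^sup>2"
    unfolding split \<beta>_def by (rule young_sum_weighted[OF eta])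
  then have young: "0 \<le> \<sigma> * ((norm bd)\<^sup>2 - 2 * (bd \<bullet> \<rho>) + (norm \<rho>)\<^sup>2 + \<beta> * (norm \<rho>0)\<^sup>2 - \<eta> * (norm ad)\<^sup>2)"
    using sigma_pos by (simp add: power2_norm_diff inner_commute)
  have "(norm (z1 - z0))\<^sup>2 = (\<tau> * \<sigma>)\<^sup>2 * (norm \<rho>)\<^sup>2"
    unfolding z1 \<rho>_def by (simp add: power_mult_distrib)
  then have Z: "1 / (\<tau>\<^sup>2 * \<sigma>) * (norm (z1 - z0))\<^sup>2 = \<sigma> * (norm \<rho>)\<^sup>2"
    "(\<tau> + \<beta>) / (\<tau>\<^sup>2 * \<sigma>) * (norm (z1 - z0))\<^sup>2 = (\<tau> + \<beta>) * \<sigma> * (norm \<rho>)\<^sup>2"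
    using sigma_pos tau_pos by (simp_all add: field_simps power2_eq_square)
  have W: "wsq (\<lambda>u. Px u + (\<eta> * \<sigma>) *\<^sub>R A (adjoint A u)) (x1 - x0)
        = wsq Shf (x1 - x0) + wsq S (x1 - x0) + \<eta> * \<sigma> * (norm ad)\<^sup>2"
    "wsq (\<lambda>v. Py v + (\<eta> * \<sigma>) *\<^sub>R B (adjoint B v)) (y1 - y0)
        = wsq Shg (y1 - y0) + wsq T (y1 - y0) + \<eta> * \<sigma> * (norm bd)\<^sup>2"
    "wsq (\<lambda>u. Shf u - (1/2) *\<^sub>R Sf u) (x1 - x0) = wsq Shf (x1 - x0) - wsq Sf (x1 - x0) / 2"
    "wsq (\<lambda>v. Shg v - (1/2) *\<^sub>R Sg v + (\<eta> * \<sigma>) *\<^sub>R B (adjoint B v)) (y1 - y0)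
        = wsq Shg (y1 - y0) - wsq Sg (y1 - y0) / 2 + \<eta> * \<sigma> * (norm bd)\<^sup>2"
    unfolding ad_def bd_def wsq_op_add_gram[OF A_lin] wsq_op_add_gram[OF B_lin] wsq_op_add wsq_op_diff
      wsq_op_scaleR by simp_all
  show ?thesis
    unfolding \<rho>_def[symmetric] \<rho>0_def[symmetric] Z W
    using core young by (simp add: algebra_simps)
qed

lemma descent_step_b:
  assumes ux: "- (Df x0 + Px (x1 - x0) + A z0 + \<sigma> *\<^sub>R A (res x1 y0)) \<in> subdiff p x1"
    and uy: "- (Dg y0 + Py (y1 - y0) + B z0 + \<sigma> *\<^sub>R B (res x1 y1)) \<in> subdiff q y1"
    and z1: "z1 = z0 + (\<tau> * \<sigma>) *\<^sub>R res x1 y1"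
    and uy0: "- (Dg ym + Py (y0 - ym) + B zm + \<sigma> *\<^sub>R B (res x0 y0)) \<in> subdiff q y0"
    and z0: "z0 = zm + (\<tau> * \<sigma>) *\<^sub>R res x0 y0"
    and kkt: "(xb, yb, zb) \<in> KKT_set p Df q Dg A B c"
    and hT: "psd_op (\<lambda>v. (1/2) *\<^sub>R Shg v + T v)"
    and al: "0 < \<alpha>" "\<alpha> \<le> 1"
  defines "\<kappa> \<equiv> 1 - \<alpha> * min \<tau> (1 / \<tau>)"
  shows "(lyap xb yb zb x0 y0 z0 + \<kappa> * \<sigma> * (norm (res x0 y0))\<^sup>2 + \<alpha> * wsq Py (y0 - ym))
           - (lyap xb yb zb x1 y1 z1 + \<kappa> * \<sigma> * (norm (res x1 y1))\<^sup>2 + \<alpha> * wsq Py (y1 - y0))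
         \<ge> wsq (\<lambda>u. (1/2) *\<^sub>R Sf u + S u + ((1 - \<alpha>) * \<sigma> / 2) *\<^sub>R A (adjoint A u)) (x1 - x0)
           + wsq (\<lambda>v. (1/2) *\<^sub>R Sg v + T v + (min \<tau> (1 + \<tau> - \<tau>\<^sup>2) * \<alpha> * \<sigma>) *\<^sub>R B (adjoint B v)) (y1 - y0)
           + (- \<tau> + \<alpha> * min (1 + \<tau>) (1 + 1 / \<tau>)) * \<sigma> * (norm (res x1 y1))\<^sup>2"
proof -
  define \<rho> where "\<rho> = res x1 y1"
  define \<rho>0 where "\<rho>0 = res x0 y0"
  define bd where "bd = adjoint B (y1 - y0)"
  define ad where "ad = adjoint A (x1 - x0)"
  have core: "lyap xb yb zb x0 y0 z0 - lyap xb yb zb x1 y1 z1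
     \<ge> wsq S (x1 - x0) + wsq Sf (x1 - x0) / 2 + wsq T (y1 - y0) + wsq Sg (y1 - y0) / 2
       + \<sigma> * (norm bd)\<^sup>2 + (2 - \<tau>) * \<sigma> * (norm \<rho>)\<^sup>2 - 2 * \<sigma> * (bd \<bullet> \<rho>)"
    unfolding bd_def \<rho>_def by (rule one_step_inequality[OF ux uy z1 kkt])
  have ysteps: "0 \<le> \<alpha> * (wsq Py (y0 - ym) - wsq Py (y1 - y0) - 2 * \<sigma> * ((\<rho> + (\<tau> - 1) *\<^sub>R \<rho>0) \<bullet> bd))"
    using consecutive_y_steps[OF hT uy uy0 z0] al unfolding \<rho>_def \<rho>0_def bd_def by simp
  have "\<rho> - \<rho>0 - bd = ad"
    unfolding \<rho>_def bd_def ad_def \<rho>0_def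
    by (simp add: linear_diff[OF adjoint_linear[OF A_lin]] linear_diff[OF adjoint_linear[OF B_lin]] algebra_simps)
  then have quad: "0 \<le> \<sigma> * ((norm bd)\<^sup>2 + (2 - \<tau>) * (norm \<rho>)\<^sup>2 - 2 * (bd \<bullet> \<rho>)
      + \<kappa> * ((norm \<rho>0)\<^sup>2 - (norm \<rho>)\<^sup>2)
      + 2 * \<alpha> * ((\<rho> + (\<tau> - 1) *\<^sub>R \<rho>0) \<bullet> bd)
      - (1 - \<alpha>) / 2 * (norm ad)\<^sup>2
      - min \<tau> (1 + \<tau> - \<tau>\<^sup>2) * \<alpha> * (norm bd)\<^sup>2
      - (- \<tau> + \<alpha> * min (1 + \<tau>) (1 + 1 / \<tau>)) * (norm \<rho>)\<^sup>2)"
    using residual_quadratic_nonneg[OF tau_pos al, of bd \<rho> \<rho>0] sigma_pos unfolding \<kappa>_def by simp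
  have W: "wsq (\<lambda>u. (1/2) *\<^sub>R Sf u + S u + ((1 - \<alpha>) * \<sigma> / 2) *\<^sub>R A (adjoint A u)) (x1 - x0)
      = wsq Sf (x1 - x0) / 2 + wsq S (x1 - x0) + (1 - \<alpha>) * \<sigma> / 2 * (norm ad)\<^sup>2"
    "wsq (\<lambda>v. (1/2) *\<^sub>R Sg v + T v + (min \<tau> (1 + \<tau> - \<tau>\<^sup>2) * \<alpha> * \<sigma>) *\<^sub>R B (adjoint B v)) (y1 - y0)
      = wsq Sg (y1 - y0) / 2 + wsq T (y1 - y0) + min \<tau> (1 + \<tau> - \<tau>\<^sup>2) * \<alpha> * \<sigma> * (norm bd)\<^sup>2"
    unfolding ad_def bd_def wsq_op_add_gram[OF A_lin] wsq_op_add_gram[OF B_lin] wsq_op_add wsq_op_scaleR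
    by simp_all
  show ?thesis
    unfolding \<rho>_def[symmetric] \<rho>0_def[symmetric] W
    using core ysteps quad by (simp add: algebra_simps)
qed

lemma lyap_le_dist_sq:
  assumes feas: "adjoint A xb + adjoint B yb = c"
  obtains C where "\<And>u v w. lyap xb yb zb u v w
      \<le> C * ((norm (u - xb))\<^sup>2 + (norm (v - yb))\<^sup>2 + (norm (w - zb))\<^sup>2)"
proof -
  obtain KP where KP: "KP \<ge> 0" "\<And>u. wsq Px u \<le> KP * (norm u)\<^sup>2"
    using wsq_le_norm_sq[OF self_adjoint_op_linear[OF Px_self_adjoint]] by blast
  obtain KQ where KQ: "KQ \<ge> 0" "\<And>v. wsq Py v \<le> KQ * (norm v)\<^sup>2"
    using wsq_le_norm_sq[OF self_adjoint_op_linear[OF Py_self_adjoint]] by blast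
  obtain KB where KB: "KB \<ge> 0" "\<And>v. (norm (adjoint B v))\<^sup>2 \<le> KB * (norm v)\<^sup>2"
    using adjoint_norm_sq_le[OF B_lin] by blast
  define C where "C = KP + (KQ + \<sigma> * KB) + 1 / (\<tau> * \<sigma>)"
  have "lyap xb yb zb u v w \<le> C * ((norm (u - xb))\<^sup>2 + (norm (v - yb))\<^sup>2 + (norm (w - zb))\<^sup>2)" for u v w
  proof -
    have "res xb v = adjoint B (v - yb)"
      using feas by (simp add: linear_diff[OF adjoint_linear[OF B_lin]] algebra_simps)
    then have "\<sigma> * (norm (res xb v))\<^sup>2 \<le> \<sigma> * KB * (norm (v - yb))\<^sup>2"
      using KB(2)[of "v - yb"] sigma_pos by (simp add: mult.assoc)
    moreover have "KP * (norm (u - xb))\<^sup>2 \<le> C * (norm (u - xb))\<^sup>2"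
      "(KQ + \<sigma> * KB) * (norm (v - yb))\<^sup>2 \<le> C * (norm (v - yb))\<^sup>2"
      "1 / (\<tau> * \<sigma>) * (norm (w - zb))\<^sup>2 \<le> C * (norm (w - zb))\<^sup>2"
      unfolding C_def using KP(1) KQ(1) KB(1) sigma_pos tau_pos by (intro mult_right_mono; simp)+
    ultimately show ?thesis
      using KP(2)[of "u - xb"] KQ(2)[of "v - yb"] by (simp add: algebra_simps)
  qed
  then show thesis by (rule that)
qed

lemma lyap_coercive_a:
  assumes feas: "adjoint A xw + adjoint B yw = c" and eta: "0 < \<eta>" "\<eta> < 1/2"
    and l1: "\<And>u. l1 * (norm u)\<^sup>2 \<le> wsq (\<lambda>u. Px u + (\<eta> * \<sigma>) *\<^sub>R A (adjoint A u)) u"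
    and l2: "\<And>v. l2 * (norm v)\<^sup>2 \<le> wsq (\<lambda>v. Py v + (\<eta> * \<sigma>) *\<^sub>R B (adjoint B v)) v"
  defines "\<beta> \<equiv> \<eta> * (1 - \<eta>) / (1 - 2 * \<eta>)"
  shows "l1 * (norm (u - xw))\<^sup>2 + l2 * (norm (v - yw))\<^sup>2 + 1 / (\<tau> * \<sigma>) * (norm (w - zw))\<^sup>2
      \<le> lyap xw yw zw u v w + \<beta> * \<sigma> * (norm (res u v))\<^sup>2"
proof -
  have e1: "res xw v = adjoint B (v - yw)"
    using feas by (simp add: linear_diff[OF adjoint_linear[OF B_lin]] algebra_simps)
  have "res u v - adjoint B (v - yw) = adjoint A (u - xw)"
    using feas by (simp add: linear_diff[OF adjoint_linear[OF B_lin]] linear_diff[OF adjoint_linear[OF A_lin]]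
        algebra_simps)
  then have "\<eta> * (norm (adjoint A (u - xw)))\<^sup>2
      \<le> \<beta> * (norm (res u v))\<^sup>2 + (1 - \<eta>) * (norm (adjoint B (v - yw)))\<^sup>2"
    using young_diff_weighted[OF eta, of "res u v" "adjoint B (v - yw)"] unfolding \<beta>_def by simp
  then have "\<sigma> * (\<eta> * (norm (adjoint A (u - xw)))\<^sup>2)
      \<le> \<sigma> * (\<beta> * (norm (res u v))\<^sup>2 + (1 - \<eta>) * (norm (adjoint B (v - yw)))\<^sup>2)"
    using sigma_pos by (intro mult_left_mono) auto
  then show ?thesis
    using l1[of "u - xw"] l2[of "v - yw"] unfolding e1 wsq_op_add_gram[OF A_lin] wsq_op_add_gram[OF B_lin]
    by (simp add: algebra_simps)
qed

lemma lyap_coercive_b: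
  assumes feas: "adjoint A xw + adjoint B yw = c"
    and Px_psd: "psd_op Px" and Py_psd: "psd_op Py" and \<mu>: "\<mu> \<le> 1"
    and lP: "lP > 0" "\<And>u. lP * (norm u)\<^sup>2 \<le> wsq (\<lambda>u. (1/2) *\<^sub>R Sf u + S u + \<sigma> *\<^sub>R A (adjoint A u)) u"
    and lM: "lM > 0" "\<And>v. lM * (norm v)\<^sup>2 \<le> wsq (\<lambda>v. (1/2) *\<^sub>R Sg v + T v + (\<mu> * \<sigma>) *\<^sub>R B (adjoint B v)) v"
  shows "(norm (u - xw))\<^sup>2 + (norm (v - yw))\<^sup>2 + (norm (w - zw))\<^sup>2
      \<le> ((2 + 2 * \<sigma>) / lP + 1 / lM + \<tau> * \<sigma>) * (lyap xw yw zw u v w + (norm (res u v))\<^sup>2)"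
proof -
  define P1 where "P1 = 1 / (\<tau> * \<sigma>) * (norm (w - zw))\<^sup>2"
  define P4 where "P4 = \<sigma> * (norm (adjoint B (v - yw)))\<^sup>2"
  define R where "R = (norm (res u v))\<^sup>2"
  have e1: "res xw v = adjoint B (v - yw)"
    using feas by (simp add: linear_diff[OF adjoint_linear[OF B_lin]] algebra_simps)
  have eA: "adjoint A (u - xw) = res u v - adjoint B (v - yw)"
    using feas by (simp add: linear_diff[OF adjoint_linear[OF B_lin]] linear_diff[OF adjoint_linear[OF A_lin]]
        algebra_simps)
  have "(norm (adjoint A (u - xw)))\<^sup>2 \<le> 2 * R + 2 * (norm (adjoint B (v - yw)))\<^sup>2"
    unfolding R_def eA using power2_norm_diff[of "res u v" "adjoint B (v - yw)"]
      power2_norm_add[of "res u v" "adjoint B (v - yw)"] zero_le_power2[of "norm (res u v + adjoint B (v - yw))"]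
    by linarith
  then have "\<sigma> * (norm (adjoint A (u - xw)))\<^sup>2 \<le> 2 * \<sigma> * R + 2 * P4"
    using mult_left_mono[OF _ less_imp_le[OF sigma_pos]] unfolding P4_def by (fastforce simp: algebra_simps)
  moreover have "wsq Sf (u - xw) \<le> wsq Shf (u - xw)" "0 \<le> wsq Sf (u - xw)"
    using psd_op_wsq_nonneg[OF Shf_ge, of "u - xw"] psd_op_wsq_nonneg[OF Sf(2), of "u - xw"]
    unfolding wsq_op_diff by simp_all
  ultimately have hx: "lP * (norm (u - xw))\<^sup>2 \<le> wsq Px (u - xw) + 2 * \<sigma> * R + 2 * P4"
    using lP(2)[of "u - xw"] unfolding wsq_op_add_gram[OF A_lin] wsq_op_add wsq_op_scaleR by simp
  have "wsq Sg (v - yw) \<le> wsq Shg (v - yw)" "0 \<le> wsq Sg (v - yw)"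
    using psd_op_wsq_nonneg[OF Shg_ge, of "v - yw"] psd_op_wsq_nonneg[OF Sg(2), of "v - yw"]
    unfolding wsq_op_diff by simp_all
  moreover have "\<mu> * \<sigma> * (norm (adjoint B (v - yw)))\<^sup>2 \<le> P4"
    unfolding P4_def using \<mu> sigma_pos by (intro mult_right_mono) auto
  ultimately have hy: "lM * (norm (v - yw))\<^sup>2 \<le> wsq Py (v - yw) + P4"
    using lM(2)[of "v - yw"] unfolding wsq_op_add_gram[OF B_lin] wsq_op_add wsq_op_scaleR by simp
  have nonneg: "0 \<le> P1" "0 \<le> wsq Px (u - xw)" "0 \<le> wsq Py (v - yw)" "0 \<le> P4" "0 \<le> R"
    using psd_op_wsq_nonneg[OF Px_psd] psd_op_wsq_nonneg[OF Py_psd] sigma_pos tau_pos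
    unfolding P1_def P4_def R_def by simp_all
  have lyap_eq: "lyap xw yw zw u v w = P1 + wsq Px (u - xw) + wsq Py (v - yw) + P4"
    unfolding P1_def P4_def e1 ..
  have "(norm (u - xw))\<^sup>2 \<le> (2 + 2 * \<sigma>) / lP * (lyap xw yw zw u v w + R)"
    using hx nonneg lP(1) sigma_pos unfolding lyap_eq
    by (simp add: field_simps) (smt (verit) mult_left_mono mult_nonneg_nonneg)
  moreover have "(norm (v - yw))\<^sup>2 \<le> 1 / lM * (lyap xw yw zw u v w + R)"
    using hy nonneg lM(1) unfolding lyap_eq by (simp add: field_simps)
  moreover have "(norm (w - zw))\<^sup>2 \<le> \<tau> * \<sigma> * (lyap xw yw zw u v w + R)"
    using nonneg sigma_pos tau_pos unfolding lyap_eq P1_def by (simp add: field_simps)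
  ultimately show ?thesis unfolding R_def by (simp add: algebra_simps)
qed

end

section \<open>Descent and convergence of the iterates\<close>

locale majorized_ipadmm = ipadmm_data +
  fixes x :: "nat \<Rightarrow> 'a" and y :: "nat \<Rightarrow> 'b" and z :: "nat \<Rightarrow> 'c"
  assumes iterates: "miPADMM_seq p Df Shf S q Dg Shg T A B c \<sigma> \<tau> x y z"
begin

abbreviation r :: "nat \<Rightarrow> 'c" where "r k \<equiv> res (x k) (y k)"

lemma x_update:
  "- (Df (x k) + Px (x (Suc k) - x k) + A (z k) + \<sigma> *\<^sub>R A (res (x (Suc k)) (y k))) \<in> subdiff p (x (Suc k))"
  using xsub_minimizer_subdiff[OF p(1,2) Px_self_adjoint A_lin] iterates
  unfolding miPADMM_seq_def by blast

lemma y_update: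
  "- (Dg (y k) + Py (y (Suc k) - y k) + B (z k) + \<sigma> *\<^sub>R B (r (Suc k))) \<in> subdiff q (y (Suc k))"
  using ysub_minimizer_subdiff[OF q(1,2) Py_self_adjoint B_lin] iterates
  unfolding miPADMM_seq_def by blast

lemma z_update: "z (Suc k) = z k + (\<tau> * \<sigma>) *\<^sub>R r (Suc k)"
  using iterates unfolding miPADMM_seq_def by blast

lemma descent_a:
  assumes "(xb, yb, zb) \<in> KKT_set p Df q Dg A B c" "0 < \<eta>" "\<eta> < 1/2"
  defines "\<beta> \<equiv> \<eta> * (1 - \<eta>) / (1 - 2 * \<eta>)"
  shows "(lyap xb yb zb (x k) (y k) (z k) + \<beta> * \<sigma> * (norm (r k))\<^sup>2)
           - (lyap xb yb zb (x (Suc k)) (y (Suc k)) (z (Suc k)) + \<beta> * \<sigma> * (norm (r (Suc k)))\<^sup>2)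
         \<ge> (1 / (\<tau>\<^sup>2 * \<sigma>) * (norm (z (Suc k) - z k))\<^sup>2
              + wsq (\<lambda>u. Px u + (\<eta> * \<sigma>) *\<^sub>R A (adjoint A u)) (x (Suc k) - x k)
              + wsq (\<lambda>v. Py v + (\<eta> * \<sigma>) *\<^sub>R B (adjoint B v)) (y (Suc k) - y k))
           - ((\<tau> + \<beta>) / (\<tau>\<^sup>2 * \<sigma>) * (norm (z (Suc k) - z k))\<^sup>2
              + wsq (\<lambda>u. Shf u - (1/2) *\<^sub>R Sf u) (x (Suc k) - x k)
              + wsq (\<lambda>v. Shg v - (1/2) *\<^sub>R Sg v + (\<eta> * \<sigma>) *\<^sub>R B (adjoint B v)) (y (Suc k) - y k))"
  unfolding \<beta>_def by (rule descent_step_a[OF x_update y_update z_update assms(1-3)])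

lemma descent_b:
  assumes "(xb, yb, zb) \<in> KKT_set p Df q Dg A B c" "psd_op (\<lambda>v. (1/2) *\<^sub>R Shg v + T v)"
    "0 < \<alpha>" "\<alpha> \<le> 1" "k \<ge> 1"
  defines "\<kappa> \<equiv> 1 - \<alpha> * min \<tau> (1 / \<tau>)"
  shows "(lyap xb yb zb (x k) (y k) (z k) + \<kappa> * \<sigma> * (norm (r k))\<^sup>2 + \<alpha> * wsq Py (y k - y (k - 1)))
           - (lyap xb yb zb (x (Suc k)) (y (Suc k)) (z (Suc k)) + \<kappa> * \<sigma> * (norm (r (Suc k)))\<^sup>2
              + \<alpha> * wsq Py (y (Suc k) - y k))
         \<ge> wsq (\<lambda>u. (1/2) *\<^sub>R Sf u + S u + ((1 - \<alpha>) * \<sigma> / 2) *\<^sub>R A (adjoint A u)) (x (Suc k) - x k)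
           + wsq (\<lambda>v. (1/2) *\<^sub>R Sg v + T v + (min \<tau> (1 + \<tau> - \<tau>\<^sup>2) * \<alpha> * \<sigma>) *\<^sub>R B (adjoint B v))
               (y (Suc k) - y k)
           + (- \<tau> + \<alpha> * min (1 + \<tau>) (1 + 1 / \<tau>)) * \<sigma> * (norm (r (Suc k)))\<^sup>2"
proof -
  obtain m where k: "k = Suc m" using \<open>k \<ge> 1\<close> by (cases k) auto
  show ?thesis
    unfolding k \<kappa>_def diff_Suc_1
    by (rule descent_step_b[OF x_update y_update z_update y_update z_update assms(1-4)])
qed

lemma limit_point_KKT:
  assumes dx: "(\<lambda>k. x (Suc k) - x k) \<longlonglongrightarrow> 0" and dy: "(\<lambda>k. y (Suc k) - y k) \<longlonglongrightarrow> 0"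
    and res: "r \<longlonglongrightarrow> 0" and s: "strict_mono s"
    and xs: "(\<lambda>j. x (s j)) \<longlonglongrightarrow> xs" and ys: "(\<lambda>j. y (s j)) \<longlonglongrightarrow> ys" and zs: "(\<lambda>j. z (s j)) \<longlonglongrightarrow> zs"
  shows "(xs, ys, zs) \<in> KKT_set p Df q Dg A B c"
proof -
  have lin: "bounded_linear A" "bounded_linear B" "bounded_linear (adjoint A)" "bounded_linear (adjoint B)"
    "bounded_linear Px" "bounded_linear Py"
    using A_lin B_lin adjoint_linear self_adjoint_op_linear[OF Px_self_adjoint]
      self_adjoint_op_linear[OF Py_self_adjoint]
    by (simp_all add: linear_conv_bounded_linear)
  have dxs: "(\<lambda>j. x (Suc (s j)) - x (s j)) \<longlonglongrightarrow> 0" and dys: "(\<lambda>j. y (Suc (s j)) - y (s j)) \<longlonglongrightarrow> 0"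
    using LIMSEQ_subseq_LIMSEQ[OF dx s] LIMSEQ_subseq_LIMSEQ[OF dy s] by (simp_all add: o_def)
  have xs1: "(\<lambda>j. x (Suc (s j))) \<longlonglongrightarrow> xs" and ys1: "(\<lambda>j. y (Suc (s j))) \<longlonglongrightarrow> ys"
    using tendsto_add[OF xs dxs] tendsto_add[OF ys dys] by simp_all
  have "(\<lambda>j. r (s j)) \<longlonglongrightarrow> res xs ys"
    by (intro tendsto_intros bounded_linear.tendsto[OF lin(3) xs] bounded_linear.tendsto[OF lin(4) ys])
  moreover have "(\<lambda>j. r (s j)) \<longlonglongrightarrow> 0" using LIMSEQ_subseq_LIMSEQ[OF res s] by (simp add: o_def)
  ultimately have feas: "res xs ys = 0" using LIMSEQ_unique by blast
  have Dfx: "(\<lambda>j. Df (x (s j))) \<longlonglongrightarrow> Df xs" and Dgy: "(\<lambda>j. Dg (y (s j))) \<longlonglongrightarrow> Dg ys"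
    using Df_cont Dg_cont xs ys by (auto simp: continuous_on_eq_continuous_at intro: isCont_tendsto_compose)
  \<comment> \<open>the subgradients produced by the two subproblems converge, and the graph of \<open>\<partial>p\<close>, \<open>\<partial>q\<close> is closed\<close>
  have "- (Df xs + Px 0 + A zs + \<sigma> *\<^sub>R A (res xs ys)) \<in> subdiff p xs"
  proof (rule subdiff_closed_graph[OF p(3) p(1) _ xs1])
    show "- (Df (x (s j)) + Px (x (Suc (s j)) - x (s j)) + A (z (s j)) + \<sigma> *\<^sub>R A (res (x (Suc (s j))) (y (s j))))
        \<in> subdiff p (x (Suc (s j)))" for j
      by (rule x_update)
    show "(\<lambda>j. - (Df (x (s j)) + Px (x (Suc (s j)) - x (s j)) + A (z (s j))
        + \<sigma> *\<^sub>R A (res (x (Suc (s j))) (y (s j))))) \<longlonglongrightarrow> - (Df xs + Px 0 + A zs + \<sigma> *\<^sub>R A (res xs ys))"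
      by (intro tendsto_intros Dfx bounded_linear.tendsto[OF lin(5) dxs] bounded_linear.tendsto[OF lin(1)]
          bounded_linear.tendsto[OF lin(3) xs1] bounded_linear.tendsto[OF lin(4) ys] zs)
  qed
  moreover have "- (Dg ys + Py 0 + B zs + \<sigma> *\<^sub>R B (res xs ys)) \<in> subdiff q ys"
  proof (rule subdiff_closed_graph[OF q(3) q(1) _ ys1])
    show "- (Dg (y (s j)) + Py (y (Suc (s j)) - y (s j)) + B (z (s j)) + \<sigma> *\<^sub>R B (r (Suc (s j))))
        \<in> subdiff q (y (Suc (s j)))" for j
      by (rule y_update)
    show "(\<lambda>j. - (Dg (y (s j)) + Py (y (Suc (s j)) - y (s j)) + B (z (s j)) + \<sigma> *\<^sub>R B (r (Suc (s j)))))
        \<longlonglongrightarrow> - (Dg ys + Py 0 + B zs + \<sigma> *\<^sub>R B (res xs ys))"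
      by (intro tendsto_intros Dgy bounded_linear.tendsto[OF lin(6) dys] bounded_linear.tendsto[OF lin(2)]
          bounded_linear.tendsto[OF lin(3) xs1] bounded_linear.tendsto[OF lin(4) ys1] zs)
  qed
  ultimately show ?thesis
    using feas linear_0[OF A_lin] linear_0[OF B_lin] linear_0[OF self_adjoint_op_linear[OF Shf(1)]]
      linear_0[OF self_adjoint_op_linear[OF S]] linear_0[OF self_adjoint_op_linear[OF Shg(1)]]
      linear_0[OF self_adjoint_op_linear[OF T]]
    unfolding KKT_set_def by (auto intro!: bexI[of _ "- (Df xs + A zs)"] bexI[of _ "- (Dg ys + B zs)"])
qed

lemma converges_to_KKT_point:
  assumes kkt: "(xb, yb, zb) \<in> KKT_set p Df q Dg A B c"
    and fejer: "\<And>xw yw zw. (xw, yw, zw) \<in> KKT_set p Df q Dg A B c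
        \<Longrightarrow> convergent (\<lambda>k. lyap xw yw zw (x k) (y k) (z k))"
    and C: "C \<ge> 0"
    and coercive: "\<And>xw yw zw k. (xw, yw, zw) \<in> KKT_set p Df q Dg A B c
        \<Longrightarrow> (norm (x k - xw))\<^sup>2 + (norm (y k - yw))\<^sup>2 + (norm (z k - zw))\<^sup>2
            \<le> C * (lyap xw yw zw (x k) (y k) (z k) + \<epsilon> k)"
    and eps: "\<epsilon> \<longlonglongrightarrow> 0"
    and dx: "(\<lambda>k. x (Suc k) - x k) \<longlonglongrightarrow> 0" and dy: "(\<lambda>k. y (Suc k) - y k) \<longlonglongrightarrow> 0"
    and res: "r \<longlonglongrightarrow> 0"
  obtains xs ys zs where "(xs, ys, zs) \<in> KKT_set p Df q Dg A B c" "x \<longlonglongrightarrow> xs" "y \<longlonglongrightarrow> ys" "z \<longlonglongrightarrow> zs"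
proof -
  define X where "X k = (x k, y k, z k)" for k
  have norm_X: "(norm (X k - (xw, yw, zw)))\<^sup>2 = (norm (x k - xw))\<^sup>2 + (norm (y k - yw))\<^sup>2 + (norm (z k - zw))\<^sup>2"
    for k xw yw zw unfolding X_def by (simp add: norm_Pair)
  have "bounded (range X)"
  proof -
    have "convergent (\<lambda>k. lyap xb yb zb (x k) (y k) (z k) + \<epsilon> k)"
      using fejer[OF kkt] eps by (auto simp: convergent_def intro: tendsto_add)
    then have "Bseq (\<lambda>k. lyap xb yb zb (x k) (y k) (z k) + \<epsilon> k)" by (rule convergent_imp_Bseq)
    then obtain M where "\<And>k. norm (lyap xb yb zb (x k) (y k) (z k) + \<epsilon> k) \<le> M"
      unfolding Bseq_def by blast
    then have M: "lyap xb yb zb (x k) (y k) (z k) + \<epsilon> k \<le> M" for k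
      using abs_ge_self order_trans unfolding real_norm_def by blast
    have "norm (X k) \<le> 1 + C * M + norm (xb, yb, zb)" for k
    proof -
      have "(norm (X k - (xb, yb, zb)))\<^sup>2 \<le> C * M"
        unfolding norm_X using coercive[OF kkt, of k] M[of k] C by (meson mult_left_mono order_trans)
      moreover have "norm (X k - (xb, yb, zb)) \<le> 1 + (norm (X k - (xb, yb, zb)))\<^sup>2"
        using zero_le_power2[of "norm (X k - (xb, yb, zb)) - 1/2"] by (simp add: power2_eq_square algebra_simps)
      ultimately show ?thesis using norm_triangle_sub[of "X k" "(xb, yb, zb)"] by linarith
    qed
    then show ?thesis unfolding bounded_iff by blast
  qed
  then obtain s l where s: "strict_mono s" and l: "(X \<circ> s) \<longlonglongrightarrow> l"
    using bounded_imp_convergent_subsequence by blast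
  obtain xs ys zs where l_eq: "l = (xs, ys, zs)" by (cases l) auto
  have lim_s: "(\<lambda>j. x (s j)) \<longlonglongrightarrow> xs" "(\<lambda>j. y (s j)) \<longlonglongrightarrow> ys" "(\<lambda>j. z (s j)) \<longlonglongrightarrow> zs"
    using tendsto_fst[OF l] tendsto_fst[OF tendsto_snd[OF l]] tendsto_snd[OF tendsto_snd[OF l]]
    unfolding l_eq by (simp_all add: X_def o_def)
  have kkt_s: "(xs, ys, zs) \<in> KKT_set p Df q Dg A B c"
    by (rule limit_point_KKT[OF dx dy res s lim_s])
  obtain L where L: "(\<lambda>k. lyap xs ys zs (x k) (y k) (z k)) \<longlonglongrightarrow> L"
    using fejer[OF kkt_s] unfolding convergent_def by blast
  \<comment> \<open>along the subsequence the Lyapunov function at the limit point is squeezed to \<open>0\<close>\<close>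
  have "L \<le> 0"
  proof -
    obtain K where K: "\<And>u v w. lyap xs ys zs u v w \<le> K * ((norm (u - xs))\<^sup>2 + (norm (v - ys))\<^sup>2 + (norm (w - zs))\<^sup>2)"
      using lyap_le_dist_sq kkt_s unfolding KKT_set_def by blast
    have "(\<lambda>j. K * ((norm (x (s j) - xs))\<^sup>2 + (norm (y (s j) - ys))\<^sup>2 + (norm (z (s j) - zs))\<^sup>2))
        \<longlonglongrightarrow> K * ((norm (xs - xs))\<^sup>2 + (norm (ys - ys))\<^sup>2 + (norm (zs - zs))\<^sup>2)"
      by (intro tendsto_intros lim_s)
    then have up: "(\<lambda>j. K * ((norm (x (s j) - xs))\<^sup>2 + (norm (y (s j) - ys))\<^sup>2 + (norm (z (s j) - zs))\<^sup>2))
        \<longlonglongrightarrow> 0" by simp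
    have "(\<lambda>j. lyap xs ys zs (x (s j)) (y (s j)) (z (s j))) \<longlonglongrightarrow> L"
      using LIMSEQ_subseq_LIMSEQ[OF L s] by (simp add: o_def)
    from LIMSEQ_le[OF this up] show ?thesis using K by blast
  qed
  define h where "h k = max 0 (C * (lyap xs ys zs (x k) (y k) (z k) + \<epsilon> k))" for k
  have bound: "(norm (x k - xs))\<^sup>2 \<le> h k" "(norm (y k - ys))\<^sup>2 \<le> h k" "(norm (z k - zs))\<^sup>2 \<le> h k" for k
    using coercive[OF kkt_s, of k] zero_le_power2[of "norm (x k - xs)"] zero_le_power2[of "norm (y k - ys)"]
      zero_le_power2[of "norm (z k - zs)"] unfolding h_def by linarith+
  have "h \<longlonglongrightarrow> max 0 (C * (L + 0))"
    unfolding h_def by (intro tendsto_intros L eps)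
  moreover have "max 0 (C * (L + 0)) = 0" using C \<open>L \<le> 0\<close> by (simp add: mult_nonneg_nonpos)
  ultimately have "h \<longlonglongrightarrow> 0" by simp
  then have "(\<lambda>k. x k - xs) \<longlonglongrightarrow> 0" "(\<lambda>k. y k - ys) \<longlonglongrightarrow> 0" "(\<lambda>k. z k - zs) \<longlonglongrightarrow> 0"
    by (auto intro: tendsto_zero_if_norm_sq_le bound)
  then show thesis using that[OF kkt_s] by (simp add: LIM_zero_iff)
qed

lemma descent_a_error_summable:
  assumes eta: "0 < \<eta>" "\<eta> < 1/2"
    and summ: "summable (\<lambda>k. wsq Shf (x (Suc k) - x k) + wsq (\<lambda>v. Shg v + \<sigma> *\<^sub>R B (adjoint B v)) (y (Suc k) - y k)
                   + (norm (r (Suc k)))\<^sup>2)"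
  defines "\<beta> \<equiv> \<eta> * (1 - \<eta>) / (1 - 2 * \<eta>)"
  defines "E \<equiv> \<lambda>k. (\<tau> + \<beta>) / (\<tau>\<^sup>2 * \<sigma>) * (norm (z (Suc k) - z k))\<^sup>2
              + wsq (\<lambda>u. Shf u - (1/2) *\<^sub>R Sf u) (x (Suc k) - x k)
              + wsq (\<lambda>v. Shg v - (1/2) *\<^sub>R Sg v + (\<eta> * \<sigma>) *\<^sub>R B (adjoint B v)) (y (Suc k) - y k)"
  shows "0 \<le> E k" "summable E"
proof -
  have \<beta>: "0 < \<beta>" unfolding \<beta>_def using eta by simp
  have dz: "(\<tau> + \<beta>) / (\<tau>\<^sup>2 * \<sigma>) * (norm (z (Suc k) - z k))\<^sup>2 = (\<tau> + \<beta>) * \<sigma> * (norm (r (Suc k)))\<^sup>2" for k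
  proof -
    have "(norm (z (Suc k) - z k))\<^sup>2 = (\<tau> * \<sigma>)\<^sup>2 * (norm (r (Suc k)))\<^sup>2"
      unfolding z_update by (simp add: power_mult_distrib)
    then show ?thesis using sigma_pos tau_pos by (simp add: field_simps power2_eq_square)
  qed
  have Ex: "wsq (\<lambda>u. Shf u - (1/2) *\<^sub>R Sf u) u = wsq (\<lambda>u. Shf u - Sf u) u + wsq Sf u / 2"
    "wsq (\<lambda>u. Shf u - (1/2) *\<^sub>R Sf u) u = wsq Shf u - wsq Sf u / 2" for u
    unfolding wsq_op_diff wsq_op_scaleR by simp_all
  have Ey: "wsq (\<lambda>v. Shg v - (1/2) *\<^sub>R Sg v + (\<eta> * \<sigma>) *\<^sub>R B (adjoint B v)) v
      = wsq (\<lambda>v. Shg v - Sg v) v + wsq Sg v / 2 + \<eta> * \<sigma> * (norm (adjoint B v))\<^sup>2"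
    "wsq (\<lambda>v. Shg v - (1/2) *\<^sub>R Sg v + (\<eta> * \<sigma>) *\<^sub>R B (adjoint B v)) v
      = wsq Shg v - wsq Sg v / 2 + \<eta> * \<sigma> * (norm (adjoint B v))\<^sup>2" for v
    unfolding wsq_op_add_gram[OF B_lin] wsq_op_diff wsq_op_scaleR by simp_all
  show E0: "0 \<le> E k" for k
    using psd_op_wsq_nonneg[OF Shf_ge, of "x (Suc k) - x k"] psd_op_wsq_nonneg[OF Sf(2), of "x (Suc k) - x k"]
      psd_op_wsq_nonneg[OF Shg_ge, of "y (Suc k) - y k"] psd_op_wsq_nonneg[OF Sg(2), of "y (Suc k) - y k"]
      eta sigma_pos tau_pos \<beta>
    unfolding E_def Ex(1) Ey(1) by (simp add: add_nonneg_nonneg)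
  define M where "M = max 1 ((\<tau> + \<beta>) * \<sigma>)"
  have E_le: "E k \<le> M * (wsq Shf (x (Suc k) - x k) + wsq (\<lambda>v. Shg v + \<sigma> *\<^sub>R B (adjoint B v)) (y (Suc k) - y k)
                   + (norm (r (Suc k)))\<^sup>2)" for k
  proof -
    let ?dx = "x (Suc k) - x k" and ?dy = "y (Suc k) - y k"
    have le_M: "t \<le> M * t" if "0 \<le> t" for t :: real
      using mult_right_mono[of 1 M t] that unfolding M_def by simp
    have "(\<tau> + \<beta>) * \<sigma> * (norm (r (Suc k)))\<^sup>2 \<le> M * (norm (r (Suc k)))\<^sup>2"
      unfolding M_def by (intro mult_right_mono) auto
    moreover have "wsq Shf ?dx \<le> M * wsq Shf ?dx"
      "wsq Shg ?dy + \<sigma> * (norm (adjoint B ?dy))\<^sup>2 \<le> M * (wsq Shg ?dy + \<sigma> * (norm (adjoint B ?dy))\<^sup>2)"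
      using psd_op_wsq_nonneg[OF Shf(2)] psd_op_wsq_nonneg[OF Shg(2), of ?dy] sigma_pos
      by (auto intro!: le_M)
    moreover have "\<eta> * \<sigma> * (norm (adjoint B ?dy))\<^sup>2 \<le> \<sigma> * (norm (adjoint B ?dy))\<^sup>2"
      using eta sigma_pos by (intro mult_right_mono) auto
    ultimately show ?thesis
      using psd_op_wsq_nonneg[OF Sf(2), of ?dx] psd_op_wsq_nonneg[OF Sg(2), of ?dy]
      unfolding E_def dz Ex(2) Ey(2) wsq_op_add_gram[OF B_lin] by (simp add: algebra_simps)
  qed
  show "summable E"
    by (rule summable_comparison_test'[OF summable_mult[OF summ, of M], where N=0]) (use E0 E_le in simp)
qed

lemma A_step_tendsto_zero:
  assumes res: "r \<longlonglongrightarrow> 0" and dy: "(\<lambda>k. y (Suc k) - y k) \<longlonglongrightarrow> 0"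
  shows "(\<lambda>k. adjoint A (x (Suc k) - x k)) \<longlonglongrightarrow> 0"
proof -
  have "(\<lambda>k. r (Suc k) - r k - adjoint B (y (Suc k) - y k)) \<longlonglongrightarrow> 0 - 0 - adjoint B 0"
    by (intro tendsto_diff LIMSEQ_Suc res bounded_linear.tendsto[OF _ dy])
      (use adjoint_linear[OF B_lin] in \<open>simp add: linear_conv_bounded_linear\<close>)
  moreover have "r (Suc k) - r k - adjoint B (y (Suc k) - y k) = adjoint A (x (Suc k) - x k)" for k
    by (simp add: linear_diff[OF adjoint_linear[OF A_lin]] linear_diff[OF adjoint_linear[OF B_lin]] algebra_simps)
  ultimately show ?thesis using linear_0[OF adjoint_linear[OF B_lin]] by simp
qed

lemma Py_step_tendsto_zero:
  assumes Py_psd: "psd_op Py" and dy: "(\<lambda>k. y (Suc k) - y k) \<longlonglongrightarrow> 0"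
  shows "(\<lambda>k. wsq Py (y k - y (k - 1))) \<longlonglongrightarrow> 0"
proof -
  obtain K where K: "\<And>v. wsq Py v \<le> K * (norm v)\<^sup>2"
    using wsq_le_norm_sq[OF self_adjoint_op_linear[OF Py_self_adjoint]] by blast
  have "(\<lambda>k. wsq Py (y (Suc k) - y k)) \<longlonglongrightarrow> 0"
  proof (rule tendsto_sandwich[OF _ _ tendsto_const])
    show "\<forall>\<^sub>F k in sequentially. 0 \<le> wsq Py (y (Suc k) - y k)"
      using psd_op_wsq_nonneg[OF Py_psd] by simp
    show "\<forall>\<^sub>F k in sequentially. wsq Py (y (Suc k) - y k) \<le> K * (norm (y (Suc k) - y k))\<^sup>2"
      using K by simp
    show "(\<lambda>k. K * (norm (y (Suc k) - y k))\<^sup>2) \<longlonglongrightarrow> 0"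
      using tendsto_mult[OF tendsto_const tendsto_power[OF tendsto_norm[OF dy], of 2], of K] by simp
  qed
  then have "(\<lambda>k. wsq Py (y (Suc k) - y (Suc k - 1))) \<longlonglongrightarrow> 0" by simp
  then show ?thesis by (rule LIMSEQ_imp_Suc)
qed

lemma convergence_a:
  assumes kkt: "(xb, yb, zb) \<in> KKT_set p Df q Dg A B c" and eta: "0 < \<eta>" "\<eta> < 1/2"
    and pdx: "pd_op (\<lambda>u. Px u + (\<eta> * \<sigma>) *\<^sub>R A (adjoint A u))"
    and pdy: "pd_op (\<lambda>v. Py v + (\<eta> * \<sigma>) *\<^sub>R B (adjoint B v))"
    and summ: "summable (\<lambda>k. wsq Shf (x (Suc k) - x k) + wsq (\<lambda>v. Shg v + \<sigma> *\<^sub>R B (adjoint B v)) (y (Suc k) - y k)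
                   + (norm (r (Suc k)))\<^sup>2)"
  obtains xs ys zs where "(xs, ys, zs) \<in> KKT_set p Df q Dg A B c" "x \<longlonglongrightarrow> xs" "y \<longlonglongrightarrow> ys" "z \<longlonglongrightarrow> zs"
proof -
  define \<beta> where "\<beta> = \<eta> * (1 - \<eta>) / (1 - 2 * \<eta>)"
  have \<beta>: "0 < \<beta>" unfolding \<beta>_def using eta by simp
  obtain l1 where l1: "l1 > 0" "\<And>u. l1 * (norm u)\<^sup>2 \<le> wsq (\<lambda>u. Px u + (\<eta> * \<sigma>) *\<^sub>R A (adjoint A u)) u"
    using pd_op_gram_coercive[OF Px_self_adjoint A_lin pdx] by blast
  obtain l2 where l2: "l2 > 0" "\<And>v. l2 * (norm v)\<^sup>2 \<le> wsq (\<lambda>v. Py v + (\<eta> * \<sigma>) *\<^sub>R B (adjoint B v)) v"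
    using pd_op_gram_coercive[OF Py_self_adjoint B_lin pdy] by blast
  define V where "V xw yw zw k = lyap xw yw zw (x k) (y k) (z k) + \<beta> * \<sigma> * (norm (r k))\<^sup>2" for xw yw zw k
  define D where "D k = 1 / (\<tau>\<^sup>2 * \<sigma>) * (norm (z (Suc k) - z k))\<^sup>2
      + wsq (\<lambda>u. Px u + (\<eta> * \<sigma>) *\<^sub>R A (adjoint A u)) (x (Suc k) - x k)
      + wsq (\<lambda>v. Py v + (\<eta> * \<sigma>) *\<^sub>R B (adjoint B v)) (y (Suc k) - y k)" for k
  have lower: "l1 * (norm (x k - xw))\<^sup>2 + l2 * (norm (y k - yw))\<^sup>2 + 1 / (\<tau> * \<sigma>) * (norm (z k - zw))\<^sup>2
      \<le> V xw yw zw k" if "(xw, yw, zw) \<in> KKT_set p Df q Dg A B c" for xw yw zw k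
    using lyap_coercive_a[OF _ eta l1(2) l2(2)] that unfolding V_def \<beta>_def KKT_set_def by blast
  have V0: "0 \<le> V xw yw zw k" if "(xw, yw, zw) \<in> KKT_set p Df q Dg A B c" for xw yw zw k
    using lower[OF that, of k] l1(1) l2(1) sigma_pos tau_pos
      mult_nonneg_nonneg[of l1 "(norm (x k - xw))\<^sup>2"] mult_nonneg_nonneg[of l2 "(norm (y k - yw))\<^sup>2"]
    by (smt (verit) divide_nonneg_nonneg mult_nonneg_nonneg zero_le_power2 mult_pos_pos)
  have D_ge: "l1 * (norm (x (Suc k) - x k))\<^sup>2 \<le> D k" "l2 * (norm (y (Suc k) - y k))\<^sup>2 \<le> D k" for k
    using l1 l2 sigma_pos mult_nonneg_nonneg[of l1 "(norm (x (Suc k) - x k))\<^sup>2"]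
      mult_nonneg_nonneg[of l2 "(norm (y (Suc k) - y k))\<^sup>2"]
    unfolding D_def by (smt (verit) divide_nonneg_nonneg zero_le_power2 mult_nonneg_nonneg)+
  define E where "E k = (\<tau> + \<beta>) / (\<tau>\<^sup>2 * \<sigma>) * (norm (z (Suc k) - z k))\<^sup>2
      + wsq (\<lambda>u. Shf u - (1/2) *\<^sub>R Sf u) (x (Suc k) - x k)
      + wsq (\<lambda>v. Shg v - (1/2) *\<^sub>R Sg v + (\<eta> * \<sigma>) *\<^sub>R B (adjoint B v)) (y (Suc k) - y k)" for k
  have E: "\<And>k. 0 \<le> E k" "summable E"
    using descent_a_error_summable[OF eta summ] unfolding E_def \<beta>_def by (auto simp: fun_eq_iff)
  have D0: "0 \<le> D k" for k
    using D_ge(1)[of k] l1(1) by (smt (verit) mult_nonneg_nonneg zero_le_power2)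
  have step: "V xw yw zw (Suc k) + D k \<le> V xw yw zw k + E k"
    if "(xw, yw, zw) \<in> KKT_set p Df q Dg A B c" for xw yw zw k
    using descent_a[OF that eta, of k] unfolding V_def D_def E_def \<beta>_def by simp
  have fejer: "convergent (V xw yw zw) \<and> summable D" if "(xw, yw, zw) \<in> KKT_set p Df q Dg A B c" for xw yw zw
    using quasi_fejer[OF V0[OF that] D0 E step[OF that]] by simp
  have res: "r \<longlonglongrightarrow> 0"
  proof -
    have "(\<lambda>k. r (Suc k)) \<longlonglongrightarrow> 0"
    proof (rule tendsto_zero_if_norm_sq_le[OF _ summable_LIMSEQ_zero[OF summ]])
      show "(norm (r (Suc k)))\<^sup>2 \<le> wsq Shf (x (Suc k) - x k)
          + wsq (\<lambda>v. Shg v + \<sigma> *\<^sub>R B (adjoint B v)) (y (Suc k) - y k) + (norm (r (Suc k)))\<^sup>2" for k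
        using psd_op_wsq_nonneg[OF Shf(2), of "x (Suc k) - x k"] psd_op_wsq_nonneg[OF Shg(2), of "y (Suc k) - y k"]
          sigma_pos unfolding wsq_op_add_gram[OF B_lin] by simp
    qed
    then show ?thesis by (rule LIMSEQ_imp_Suc)
  qed
  have D_lim: "D \<longlonglongrightarrow> 0" using fejer[OF kkt] summable_LIMSEQ_zero by blast
  have "(\<lambda>k. x (Suc k) - x k) \<longlonglongrightarrow> 0"
    using D_ge(1) l1(1)
    by (intro tendsto_zero_if_norm_sq_le[OF _ tendsto_divide_zero[OF D_lim, of l1]]) (simp add: field_simps)
  moreover have "(\<lambda>k. y (Suc k) - y k) \<longlonglongrightarrow> 0"
    using D_ge(2) l2(1)
    by (intro tendsto_zero_if_norm_sq_le[OF _ tendsto_divide_zero[OF D_lim, of l2]]) (simp add: field_simps)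
  moreover have eps: "(\<lambda>k. \<beta> * \<sigma> * (norm (r k))\<^sup>2) \<longlonglongrightarrow> 0"
    using tendsto_mult[OF tendsto_const tendsto_power[OF tendsto_norm[OF res], of 2], of "\<beta> * \<sigma>"] by simp
  moreover have "convergent (\<lambda>k. lyap xw yw zw (x k) (y k) (z k))"
    if "(xw, yw, zw) \<in> KKT_set p Df q Dg A B c" for xw yw zw
    using fejer[OF that] eps convergent_diff[of "V xw yw zw" "\<lambda>k. \<beta> * \<sigma> * (norm (r k))\<^sup>2"]
    unfolding V_def convergent_def by auto
  moreover have "(norm (x k - xw))\<^sup>2 + (norm (y k - yw))\<^sup>2 + (norm (z k - zw))\<^sup>2
      \<le> (1 / l1 + 1 / l2 + \<tau> * \<sigma>) * (lyap xw yw zw (x k) (y k) (z k) + \<beta> * \<sigma> * (norm (r k))\<^sup>2)"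
    if "(xw, yw, zw) \<in> KKT_set p Df q Dg A B c" for xw yw zw k
  proof -
    have l: "l1 * (norm (x k - xw))\<^sup>2 \<le> V xw yw zw k" "l2 * (norm (y k - yw))\<^sup>2 \<le> V xw yw zw k"
      "1 / (\<tau> * \<sigma>) * (norm (z k - zw))\<^sup>2 \<le> V xw yw zw k"
      using lower[OF that, of k] l1(1) l2(1) sigma_pos tau_pos
      by (smt (verit) divide_nonneg_nonneg mult_nonneg_nonneg zero_le_power2 mult_pos_pos)+
    have "(norm (x k - xw))\<^sup>2 \<le> V xw yw zw k / l1" "(norm (y k - yw))\<^sup>2 \<le> V xw yw zw k / l2"
      "(norm (z k - zw))\<^sup>2 \<le> \<tau> * \<sigma> * V xw yw zw k"
      using l l1(1) l2(1) sigma_pos tau_pos by (simp_all add: field_simps)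
    then show ?thesis unfolding V_def by (simp add: algebra_simps add_divide_distrib)
  qed
  ultimately show thesis
    using converges_to_KKT_point[OF kkt, where C="1 / l1 + 1 / l2 + \<tau> * \<sigma>"] that res l1(1) l2(1)
      sigma_pos tau_pos by (smt (verit) divide_pos_pos mult_pos_pos)
qed

lemma convergence_b:
  assumes kkt: "(xb, yb, zb) \<in> KKT_set p Df q Dg A B c"
    and hT: "psd_op (\<lambda>v. (1/2) *\<^sub>R Shg v + T v)"
    and al: "\<tau> / min (1 + \<tau>) (1 + 1 / \<tau>) < \<alpha>" "\<alpha> \<le> 1"
    and Px_psd: "psd_op Px"
    and Hf_psd: "psd_op (\<lambda>u. (1/2) *\<^sub>R Sf u + S u + ((1 - \<alpha>) * \<sigma> / 2) *\<^sub>R A (adjoint A u))"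
    and pdP: "pd_op (\<lambda>u. (1/2) *\<^sub>R Sf u + S u + \<sigma> *\<^sub>R A (adjoint A u))"
    and pdM: "pd_op (\<lambda>v. (1/2) *\<^sub>R Sg v + T v + (min \<tau> (1 + \<tau> - \<tau>\<^sup>2) * \<alpha> * \<sigma>) *\<^sub>R B (adjoint B v))"
  obtains xs ys zs where "(xs, ys, zs) \<in> KKT_set p Df q Dg A B c" "x \<longlonglongrightarrow> xs" "y \<longlonglongrightarrow> ys" "z \<longlonglongrightarrow> zs"
proof -
  define \<mu> where "\<mu> = min (1 + \<tau>) (1 + 1 / \<tau>)"
  define m where "m = min \<tau> (1 + \<tau> - \<tau>\<^sup>2)"
  define \<kappa> where "\<kappa> = 1 - \<alpha> * min \<tau> (1 / \<tau>)"
  note stepsize = admissible_dual_stepsize[OF tau_pos al, folded \<mu>_def m_def \<kappa>_def]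
  have gap: "0 < (- \<tau> + \<alpha> * \<mu>) * \<sigma>" using stepsize(4) sigma_pos by simp
  have "0 \<le> wsq Py v" for v
    using psd_op_wsq_nonneg[OF hT, of v] psd_op_wsq_nonneg[OF Shg(2), of v]
    unfolding wsq_op_add wsq_op_scaleR by simp
  then have Py_psd: "psd_op Py" by (simp add: psd_op_def wsq_def)
  obtain lP where lP: "lP > 0" "\<And>u. lP * (norm u)\<^sup>2 \<le> wsq (\<lambda>u. (1/2) *\<^sub>R Sf u + S u + \<sigma> *\<^sub>R A (adjoint A u)) u"
    using pd_op_gram_coercive[of "\<lambda>u. (1/2) *\<^sub>R Sf u + S u", OF _ A_lin pdP]
      self_adjoint_op_add[OF self_adjoint_op_scaleR[OF Sf(1)] S] by blast
  obtain lM where lM: "lM > 0"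
    "\<And>v. lM * (norm v)\<^sup>2 \<le> wsq (\<lambda>v. (1/2) *\<^sub>R Sg v + T v + (m * \<alpha> * \<sigma>) *\<^sub>R B (adjoint B v)) v"
    using pd_op_gram_coercive[of "\<lambda>v. (1/2) *\<^sub>R Sg v + T v", OF _ B_lin pdM[folded m_def]]
      self_adjoint_op_add[OF self_adjoint_op_scaleR[OF Sg(1)] T] by blast
  define \<xi> where "\<xi> k = wsq Py (y k - y (k - 1))" for k
  define V where "V xw yw zw k = lyap xw yw zw (x k) (y k) (z k) + \<kappa> * \<sigma> * (norm (r k))\<^sup>2 + \<alpha> * \<xi> k"
    for xw yw zw k
  define D where "D k = wsq (\<lambda>u. (1/2) *\<^sub>R Sf u + S u + ((1 - \<alpha>) * \<sigma> / 2) *\<^sub>R A (adjoint A u)) (x (Suc k) - x k)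
      + wsq (\<lambda>v. (1/2) *\<^sub>R Sg v + T v + (m * \<alpha> * \<sigma>) *\<^sub>R B (adjoint B v)) (y (Suc k) - y k)
      + (- \<tau> + \<alpha> * \<mu>) * \<sigma> * (norm (r (Suc k)))\<^sup>2" for k
  have HF0: "0 \<le> wsq (\<lambda>u. (1/2) *\<^sub>R Sf u + S u + ((1 - \<alpha>) * \<sigma> / 2) *\<^sub>R A (adjoint A u)) u" for u
    by (rule psd_op_wsq_nonneg[OF Hf_psd])
  have MG0: "lM * (norm v)\<^sup>2 \<le> wsq (\<lambda>v. (1/2) *\<^sub>R Sg v + T v + (m * \<alpha> * \<sigma>) *\<^sub>R B (adjoint B v)) v"
    "0 \<le> wsq (\<lambda>v. (1/2) *\<^sub>R Sg v + T v + (m * \<alpha> * \<sigma>) *\<^sub>R B (adjoint B v)) v" for v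
    using lM(2)[of v] mult_nonneg_nonneg[OF less_imp_le[OF lM(1)] zero_le_power2[of "norm v"]] by simp_all
  have D0: "0 \<le> D k" for k
    unfolding D_def using HF0 MG0 gap by (simp add: add_nonneg_nonneg)
  have \<xi>0: "0 \<le> \<xi> k" for k unfolding \<xi>_def by (rule psd_op_wsq_nonneg[OF Py_psd])
  have V0: "0 \<le> V xw yw zw k" for xw yw zw k
    unfolding V_def using psd_op_wsq_nonneg[OF Px_psd] psd_op_wsq_nonneg[OF Py_psd] \<xi>0 stepsize(1,2) sigma_pos tau_pos
    by (intro add_nonneg_nonneg mult_nonneg_nonneg) auto
  have step: "V xw yw zw (Suc k) + D k \<le> V xw yw zw k + 0"
    if "(xw, yw, zw) \<in> KKT_set p Df q Dg A B c" "k \<ge> 1" for xw yw zw k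
    using descent_b[OF that(1) hT stepsize(1) al(2) that(2)]
    unfolding V_def D_def \<xi>_def \<kappa>_def m_def \<mu>_def diff_Suc_1 by simp
  have fejer: "convergent (V xw yw zw) \<and> summable (\<lambda>k. D (k + 1))"
    if "(xw, yw, zw) \<in> KKT_set p Df q Dg A B c" for xw yw zw
    using quasi_fejer[of "V xw yw zw" D "\<lambda>_. 0" 1, OF V0 D0 _ _ step[OF that]] by simp
  have "(\<lambda>k. D (Suc k)) \<longlonglongrightarrow> 0" using summable_LIMSEQ_zero fejer[OF kkt] by auto
  then have D_lim: "D \<longlonglongrightarrow> 0" by (rule LIMSEQ_imp_Suc)
  have dy: "(\<lambda>k. y (Suc k) - y k) \<longlonglongrightarrow> 0"
  proof (rule tendsto_zero_if_norm_sq_le[OF _ tendsto_divide_zero[OF D_lim, of lM]])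
    show "(norm (y (Suc k) - y k))\<^sup>2 \<le> D k / lM" for k
      using MG0(1)[of "y (Suc k) - y k"] HF0[of "x (Suc k) - x k"] gap lM(1)
        mult_nonneg_nonneg[OF less_imp_le[OF gap] zero_le_power2[of "norm (r (Suc k))"]]
      unfolding D_def by (simp add: field_simps)
  qed
  have "(\<lambda>k. r (Suc k)) \<longlonglongrightarrow> 0"
  proof (rule tendsto_zero_if_norm_sq_le[OF _ tendsto_divide_zero[OF D_lim, of "(- \<tau> + \<alpha> * \<mu>) * \<sigma>"]])
    show "(norm (r (Suc k)))\<^sup>2 \<le> D k / ((- \<tau> + \<alpha> * \<mu>) * \<sigma>)" for k
      using MG0(2)[of "y (Suc k) - y k"] HF0[of "x (Suc k) - x k"] gap
      unfolding D_def by (simp add: field_simps)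
  qed
  then have res: "r \<longlonglongrightarrow> 0" by (rule LIMSEQ_imp_Suc)
  have Adx: "(\<lambda>k. adjoint A (x (Suc k) - x k)) \<longlonglongrightarrow> 0" by (rule A_step_tendsto_zero[OF res dy])
  \<comment> \<open>the \<open>x\<close>-steps are controlled through \<open>\<Sigma>\<^sub>f/2 + S + \<sigma>AA\<^sup>*\<close>, whose excess over \<open>H\<^sub>f\<close> is an \<open>A\<^sup>*\<close>-term\<close>
  have dx: "(\<lambda>k. x (Suc k) - x k) \<longlonglongrightarrow> 0"
  proof (rule tendsto_zero_if_norm_sq_le)
    show "(norm (x (Suc k) - x k))\<^sup>2 \<le> (D k + (1 + \<alpha>) * \<sigma> / 2 * (norm (adjoint A (x (Suc k) - x k)))\<^sup>2) / lP" for k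
      using lP(2)[of "x (Suc k) - x k"] MG0(2)[of "y (Suc k) - y k"] gap lP(1)
        mult_nonneg_nonneg[OF less_imp_le[OF gap] zero_le_power2[of "norm (r (Suc k))"]]
      unfolding D_def wsq_op_add_gram[OF A_lin] wsq_op_add wsq_op_scaleR by (simp add: field_simps)
    have "(\<lambda>k. D k + (1 + \<alpha>) * \<sigma> / 2 * (norm (adjoint A (x (Suc k) - x k)))\<^sup>2) \<longlonglongrightarrow> 0"
      using tendsto_add[OF D_lim tendsto_mult[OF tendsto_const tendsto_power[OF tendsto_norm[OF Adx], of 2]],
          of "(1 + \<alpha>) * \<sigma> / 2"] by simp
    then show "(\<lambda>k. (D k + (1 + \<alpha>) * \<sigma> / 2 * (norm (adjoint A (x (Suc k) - x k)))\<^sup>2) / lP) \<longlonglongrightarrow> 0"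
      by (rule tendsto_divide_zero)
  qed
  have \<xi>_lim: "\<xi> \<longlonglongrightarrow> 0" unfolding \<xi>_def by (rule Py_step_tendsto_zero[OF Py_psd dy])
  have r2: "(\<lambda>k. (norm (r k))\<^sup>2) \<longlonglongrightarrow> 0"
    using tendsto_power[OF tendsto_norm[OF res], of 2] by simp
  have "convergent (\<lambda>k. lyap xw yw zw (x k) (y k) (z k))"
    if "(xw, yw, zw) \<in> KKT_set p Df q Dg A B c" for xw yw zw
  proof -
    have "(\<lambda>k. \<kappa> * \<sigma> * (norm (r k))\<^sup>2 + \<alpha> * \<xi> k) \<longlonglongrightarrow> \<kappa> * \<sigma> * 0 + \<alpha> * 0"
      by (intro tendsto_intros r2 \<xi>_lim)
    then show ?thesis
      using fejer[OF that] convergent_diff[of "V xw yw zw" "\<lambda>k. \<kappa> * \<sigma> * (norm (r k))\<^sup>2 + \<alpha> * \<xi> k"]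
      unfolding V_def convergent_def by auto
  qed
  moreover have "(norm (x k - xw))\<^sup>2 + (norm (y k - yw))\<^sup>2 + (norm (z k - zw))\<^sup>2
      \<le> ((2 + 2 * \<sigma>) / lP + 1 / lM + \<tau> * \<sigma>) * (lyap xw yw zw (x k) (y k) (z k) + (norm (r k))\<^sup>2)"
    if "(xw, yw, zw) \<in> KKT_set p Df q Dg A B c" for xw yw zw k
    using lyap_coercive_b[OF _ Px_psd Py_psd stepsize(3) lP, of xw yw] lM that
    unfolding KKT_set_def by (auto simp: mult.assoc)
  ultimately show thesis
    using converges_to_KKT_point[OF kkt] that dx dy res r2 lP(1) lM(1) sigma_pos tau_pos
    by (smt (verit) divide_nonneg_nonneg mult_nonneg_nonneg)
qed

end

theorem theorem4p1:
  fixes p :: "'a::euclidean_space \<Rightarrow> ereal" and f :: "'a \<Rightarrow> real" and Df :: "'a \<Rightarrow> 'a"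
    and q :: "'b::euclidean_space \<Rightarrow> ereal" and g :: "'b \<Rightarrow> real" and Dg :: "'b \<Rightarrow> 'b"
    and A :: "'c::euclidean_space \<Rightarrow> 'a" and B :: "'c \<Rightarrow> 'b" and c :: 'c
    and Sf Shf S :: "'a \<Rightarrow> 'a" and Sg Shg T :: "'b \<Rightarrow> 'b"
    and \<sigma> \<tau> :: real
    and x :: "nat \<Rightarrow> 'a" and y :: "nat \<Rightarrow> 'b" and z :: "nat \<Rightarrow> 'c"
    and xb :: 'a and yb :: 'b and zb :: 'c
  assumes p_cpc: "proper_efun p" "convex_efun p" "closed_efun p"
    and q_cpc: "proper_efun q" "convex_efun q" "closed_efun q"
    and f_conv: "convex_on UNIV f" and f_grad: "\<And>u. (f has_derivative (\<lambda>h. Df u \<bullet> h)) (at u)"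
    and f_lip: "\<exists>L. L-lipschitz_on UNIV Df"
    and g_conv: "convex_on UNIV g" and g_grad: "\<And>u. (g has_derivative (\<lambda>h. Dg u \<bullet> h)) (at u)"
    and g_lip: "\<exists>L. L-lipschitz_on UNIV Dg"
    and A_lin: "linear A" and B_lin: "linear B"
    and Sf_sa: "self_adjoint_op Sf" "psd_op Sf" and Shf_sa: "self_adjoint_op Shf" "psd_op Shf"
    and Shf_ge: "psd_op (\<lambda>u. Shf u - Sf u)"
    and Sg_sa: "self_adjoint_op Sg" "psd_op Sg" and Shg_sa: "self_adjoint_op Shg" "psd_op Shg"
    and Shg_ge: "psd_op (\<lambda>u. Shg u - Sg u)"
    and f_maj: "\<And>u u'. f u' + (u - u') \<bullet> Df u' + wsq Sf (u - u') / 2 \<le> f u"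
               "\<And>u u'. f u \<le> f u' + (u - u') \<bullet> Df u' + wsq Shf (u - u') / 2"
    and g_maj: "\<And>v v'. g v' + (v - v') \<bullet> Dg v' + wsq Sg (v - v') / 2 \<le> g v"
               "\<And>v v'. g v \<le> g v' + (v - v') \<bullet> Dg v' + wsq Shg (v - v') / 2"
    and CQ: "\<exists>x0 y0. (x0, y0) \<in> rel_interior (edom p \<times> edom q) \<and> adjoint A x0 + adjoint B y0 = c"
    and sol_nonempty: "\<exists>xs ys. primal_opt p f q g A B c xs ys"
    and sigma_pos: "\<sigma> > 0" and tau_pos: "\<tau> > 0"
    and S_sa: "self_adjoint_op S" and T_sa: "self_adjoint_op T"
    and S_cond: "psd_op (\<lambda>u. Shf u + S u + \<sigma> *\<^sub>R A (adjoint A u))"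
    and T_cond: "psd_op (\<lambda>v. Shg v + T v + \<sigma> *\<^sub>R B (adjoint B v))"
    and alg: "miPADMM_seq p Df Shf S q Dg Shg T A B c \<sigma> \<tau> x y z"
    and kkt: "(xb, yb, zb) \<in> KKT_set p Df q Dg A B c"
  defines "AA \<equiv> \<lambda>u. A (adjoint A u)" and "BB \<equiv> \<lambda>v. B (adjoint B v)"
    and "r \<equiv> \<lambda>k. adjoint A (x k) + adjoint B (y k) - c"
    and "phib \<equiv> \<lambda>k. (1 / (\<tau> * \<sigma>)) * (norm (z k - zb))\<^sup>2 + wsq (\<lambda>u. Shf u + S u) (x k - xb)
                     + wsq (\<lambda>v. Shg v + T v) (y k - yb)
                     + \<sigma> * (norm (adjoint A xb + adjoint B (y k) - c))\<^sup>2"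
    and "xi \<equiv> \<lambda>k. wsq (\<lambda>v. Shg v + T v) (y k - y (k - 1))"
    and "Hf \<equiv> \<lambda>\<alpha> u. (1/2) *\<^sub>R Sf u + S u + ((1 - \<alpha>) * \<sigma> / 2) *\<^sub>R A (adjoint A u)"
    and "Mg \<equiv> \<lambda>\<alpha> v. (1/2) *\<^sub>R Sg v + T v + (min \<tau> (1 + \<tau> - \<tau>\<^sup>2) * \<alpha> * \<sigma>) *\<^sub>R B (adjoint B v)"
    and "conv \<equiv> (\<exists>xs ys zs. ((\<lambda>k. (x k, y k)) \<longlonglongrightarrow> (xs, ys)) \<and> primal_opt p f q g A B c xs ys
                    \<and> (z \<longlonglongrightarrow> zs) \<and> dual_opt p f q g A B c zs)"
  shows
    "(\<forall>\<eta> k. 0 < \<eta> \<longrightarrow> \<eta> < 1/2 \<longrightarrow>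
        (let \<beta> = \<eta> * (1 - \<eta>) / (1 - 2 * \<eta>) in
          (phib k + \<beta> * \<sigma> * (norm (r k))\<^sup>2) - (phib (Suc k) + \<beta> * \<sigma> * (norm (r (Suc k)))\<^sup>2)
          \<ge> (1 / (\<tau>\<^sup>2 * \<sigma>) * (norm (z (Suc k) - z k))\<^sup>2
              + wsq (\<lambda>u. Shf u + S u + (\<eta> * \<sigma>) *\<^sub>R AA u) (x (Suc k) - x k)
              + wsq (\<lambda>v. Shg v + T v + (\<eta> * \<sigma>) *\<^sub>R BB v) (y (Suc k) - y k))
            - ((\<tau> + \<beta>) / (\<tau>\<^sup>2 * \<sigma>) * (norm (z (Suc k) - z k))\<^sup>2
              + wsq (\<lambda>u. Shf u - (1/2) *\<^sub>R Sf u) (x (Suc k) - x k)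
              + wsq (\<lambda>v. Shg v - (1/2) *\<^sub>R Sg v + (\<eta> * \<sigma>) *\<^sub>R BB v) (y (Suc k) - y k))))
   \<and> ((\<exists>\<eta>. 0 < \<eta> \<and> \<eta> < 1/2 \<and> pd_op (\<lambda>u. Shf u + S u + (\<eta> * \<sigma>) *\<^sub>R AA u)
            \<and> pd_op (\<lambda>v. Shg v + T v + (\<eta> * \<sigma>) *\<^sub>R BB v))
       \<longrightarrow> summable (\<lambda>k. wsq Shf (x (Suc k) - x k) + wsq (\<lambda>v. Shg v + \<sigma> *\<^sub>R BB v) (y (Suc k) - y k)
                        + (norm (r (Suc k)))\<^sup>2)
       \<longrightarrow> conv)
   \<and> (psd_op (\<lambda>v. (1/2) *\<^sub>R Shg v + T v) \<longrightarrow>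
       (\<forall>\<alpha> k. 0 < \<alpha> \<longrightarrow> \<alpha> \<le> 1 \<longrightarrow> 1 \<le> k \<longrightarrow>
          (let \<kappa> = 1 - \<alpha> * min \<tau> (1 / \<tau>) in
            (phib k + \<kappa> * \<sigma> * (norm (r k))\<^sup>2 + \<alpha> * xi k)
              - (phib (Suc k) + \<kappa> * \<sigma> * (norm (r (Suc k)))\<^sup>2 + \<alpha> * xi (Suc k))
            \<ge> wsq (Hf \<alpha>) (x (Suc k) - x k) + wsq (Mg \<alpha>) (y (Suc k) - y k)
              + (- \<tau> + \<alpha> * min (1 + \<tau>) (1 + 1 / \<tau>)) * \<sigma> * (norm (r (Suc k)))\<^sup>2))
       \<and> ((\<tau> < (1 + sqrt 5) / 2 \<and>
            (\<exists>\<alpha>. \<tau> / min (1 + \<tau>) (1 + 1 / \<tau>) < \<alpha> \<and> \<alpha> \<le> 1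
                 \<and> psd_op (\<lambda>u. Shf u + S u) \<and> psd_op (Hf \<alpha>)
                 \<and> pd_op (\<lambda>u. (1/2) *\<^sub>R Sf u + S u + \<sigma> *\<^sub>R AA u) \<and> pd_op (Mg \<alpha>)))
           \<longrightarrow> conv))"
proof -
  have Df_cont: "continuous_on UNIV Df" and Dg_cont: "continuous_on UNIV Dg"
    using f_lip g_lip lipschitz_on_continuous_on by blast+
  have ipadmm: "majorized_ipadmm p f Df q g Dg A B c Sf Shf S Sg Shg T \<sigma> \<tau> x y z"
    unfolding majorized_ipadmm_def majorized_ipadmm_axioms_def ipadmm_data_def
    using p_cpc q_cpc Df_cont Dg_cont A_lin B_lin Sf_sa Shf_sa Shf_ge Sg_sa Shg_sa Shg_ge f_maj g_maj
      sigma_pos tau_pos S_sa T_sa alg by blast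
  have conv_if: conv if "(xs, ys, zs) \<in> KKT_set p Df q Dg A B c" "x \<longlonglongrightarrow> xs" "y \<longlonglongrightarrow> ys" "z \<longlonglongrightarrow> zs"
    for xs ys zs
    using KKT_primal_dual_opt[OF A_lin B_lin p_cpc(1) q_cpc(1) f_maj(1) Sf_sa(2) g_maj(1) Sg_sa(2) that(1)]
      tendsto_Pair[OF that(2,3)] that(4) unfolding conv_def by blast
  show ?thesis
    unfolding Let_def phib_def r_def xi_def Hf_def Mg_def AA_def BB_def
    apply (intro conjI allI impI)
       apply (rule majorized_ipadmm.descent_a[OF ipadmm kkt]; assumption)
      apply (elim exE conjE, rule majorized_ipadmm.convergence_a[OF ipadmm kkt], assumption+, rule conv_if)
       apply assumption+
     apply (unfold diff_Suc_1, rule majorized_ipadmm.descent_b[OF ipadmm kkt]; assumption)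
    apply (elim exE conjE, rule majorized_ipadmm.convergence_b[OF ipadmm kkt], assumption+, rule conv_if)
       apply assumption+
    done
qed

end
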